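(* Let $\bar t>0$, $I=(0,\bar t)$, let $\gamma_1,\gamma_2\in\mathrm{Lip}(I)$ (extended continuously to $\bar I$) with $\gamma_1<0<\gamma_2$ on $I$, $\gamma_1(0)=\gamma_1(\bar t)=\gamma_2(0)=\gamma_2(\bar t)=0$, $\gamma_1$ convex and $\gamma_2$ concave, and let $D=\{(y,t)\in\mathbb W: t\in I,\ \gamma_1(t)<y<\gamma_2(t)\}$. Let $\phi:\partial D\to\mathbb R$ be continuous with $\phi_1,\phi_2\in\mathrm{Lip}(I)$, and assume $$\zeta<\frac{\sqrt{129}-11}{4}.$$ Then there exists $u:\bar D\to\mathbb R$ such that: (i) $R_\phi=S_u=\{(u(y,t),y,t+2yu(y,t)):(y,t)\in D\}$; (ii) $u$ is Lipschitz continuous on $\bar D$; (iii) $u=\phi$ on $\partial D$.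
   Context: $\mathbb H$ is $\mathbb R^3$ with product $(x,y,t)\cdot(\xi,\eta,\tau)=(x+\xi,y+\eta,t+\tau+2(y\xi-x\eta))$; $X=\partial_x+2y\partial_t$, $Y=\partial_y-2x\partial_t$, $H_p=\mathrm{span}\{X(p),Y(p)\}$. $\mathbb W=\{x=0\}$ with coordinates $(y,t)$. Set $\phi_i(s)=\phi(\gamma_i(s),s)$, $\|\gamma\|_\infty=\max_i\|\gamma_i\|_\infty$, $\mathrm{Lip}(\gamma)=\max_i\mathrm{Lip}(\gamma_i)$, $\|\phi\|_\infty=\max_i\|\phi_i\|_\infty$, $\mathrm{Lip}(\phi)=\max_i\mathrm{Lip}(\phi_i)$, $\zeta=4(\|\gamma\|_\infty+\mathrm{Lip}(\gamma))(\|\phi\|_\infty+\mathrm{Lip}(\phi))$, $p_i(s)=(\phi_i(s),\gamma_i(s),s+2\gamma_i(s)\phi_i(s))$. For $\zeta<1$, $\lambda(s)$ denotes the unique point of $\bar I$ with $p_2(\lambda(s))-p_1(s)\in H_{p_1(s)}$ (equivalently $\lambda(s)-s+2(\gamma_2(\lambda(s))-\gamma_1(s))(\phi_2(\lambda(s))+\phi_1(s))=0$); $\lambda$ is increasing and bi-Lipschitz with $\lambda(0)=0$, $\lambda(\bar t)=\bar t$. Define $\rho(h,s)=(1-h)p_1(s)+h\,p_2(\lambda(s))$ for $(h,s)\in Q=(0,1)\times I$ and $R_\phi=\rho(Q)$. *)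

theory Defs
  imports "HOL-Analysis.Analysis"
begin

text \<open>Points of the Heisenberg group are triples (x,y,t) :: real \<times> real \<times> real.
  Points of W = {x=0} are pairs (y,t).\<close>

definition hplane :: "real \<times> real \<times> real \<Rightarrow> (real \<times> real \<times> real) set" where
  "hplane p = (case p of (x, y, t) \<Rightarrow> span {(1, 0, 2 * y), (0, 1, - 2 * x)})"

definition domD :: "real \<Rightarrow> (real \<Rightarrow> real) \<Rightarrow> (real \<Rightarrow> real) \<Rightarrow> (real \<times> real) set" where
  "domD tb g1 g2 = {(y, t). t \<in> {0<..<tb} \<and> g1 t < y \<and> y < g2 t}"

definition sup_norm :: "real \<Rightarrow> (real \<Rightarrow> real) \<Rightarrow> real" where
  "sup_norm tb f = Sup ((\<lambda>s. \<bar>f s\<bar>) ` {0<..<tb})"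

definition lip_const :: "real \<Rightarrow> (real \<Rightarrow> real) \<Rightarrow> real" where
  "lip_const tb f = Inf {L. lipschitz_on L {0<..<tb} f}"

definition phi_i :: "(real \<times> real \<Rightarrow> real) \<Rightarrow> (real \<Rightarrow> real) \<Rightarrow> real \<Rightarrow> real" where
  "phi_i phi g s = phi (g s, s)"

definition zeta :: "real \<Rightarrow> (real \<Rightarrow> real) \<Rightarrow> (real \<Rightarrow> real) \<Rightarrow> (real \<times> real \<Rightarrow> real) \<Rightarrow> real" where
  "zeta tb g1 g2 phi =
     4 * (max (sup_norm tb g1) (sup_norm tb g2) + max (lip_const tb g1) (lip_const tb g2))
       * (max (sup_norm tb (phi_i phi g1)) (sup_norm tb (phi_i phi g2))
          + max (lip_const tb (phi_i phi g1)) (lip_const tb (phi_i phi g2)))"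

definition p_i :: "(real \<times> real \<Rightarrow> real) \<Rightarrow> (real \<Rightarrow> real) \<Rightarrow> real \<Rightarrow> real \<times> real \<times> real" where
  "p_i phi g s = (phi_i phi g s, g s, s + 2 * g s * phi_i phi g s)"

definition lam :: "real \<Rightarrow> (real \<Rightarrow> real) \<Rightarrow> (real \<Rightarrow> real) \<Rightarrow> (real \<times> real \<Rightarrow> real) \<Rightarrow> real \<Rightarrow> real" where
  "lam tb g1 g2 phi s = (THE l. l \<in> {0..tb} \<and>
      p_i phi g2 l - p_i phi g1 s \<in> hplane (p_i phi g1 s))"

definition rho :: "real \<Rightarrow> (real \<Rightarrow> real) \<Rightarrow> (real \<Rightarrow> real) \<Rightarrow> (real \<times> real \<Rightarrow> real) \<Rightarrow> real \<Rightarrow> real \<Rightarrow> real \<times> real \<times> real" where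
  "rho tb g1 g2 phi h s = (1 - h) *\<^sub>R p_i phi g1 s + h *\<^sub>R p_i phi g2 (lam tb g1 g2 phi s)"

definition R_phi :: "real \<Rightarrow> (real \<Rightarrow> real) \<Rightarrow> (real \<Rightarrow> real) \<Rightarrow> (real \<times> real \<Rightarrow> real) \<Rightarrow> (real \<times> real \<times> real) set" where
  "R_phi tb g1 g2 phi = {rho tb g1 g2 phi h s | h s. h \<in> {0<..<1} \<and> s \<in> {0<..<tb}}"

definition S_u :: "(real \<times> real) set \<Rightarrow> (real \<times> real \<Rightarrow> real) \<Rightarrow> (real \<times> real \<times> real) set" where
  "S_u D u = {(u (y, t), y, t + 2 * y * u (y, t)) | y t. (y, t) \<in> D}"

end

theory Submission
  imports Defs
begin

text \<open>\<open>R\<^sub>\<phi>\<close> is ruled by the horizontal segments from \<open>p\<^sub>1(s)\<close> to \<open>p\<^sub>2(\<lambda>(s))\<close>. The point of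
  the segment at height \<open>y\<close> projects along \<open>X\<close> to a point \<open>(y, T(y, s))\<close> of \<open>\<bbbW>\<close>, and since
  \<open>\<zeta>\<close> is small, \<open>T(y, s) - s\<close> varies by at most \<open>|\<Delta>s| / 2 + O(|\<Delta>y|)\<close>. So for fixed \<open>y\<close> the
  map \<open>s \<mapsto> T(y, s)\<close> is strictly increasing and, by convexity of \<open>\<gamma>\<^sub>1\<close> and concavity of
  \<open>\<gamma>\<^sub>2\<close>, carries the rulings that cross height \<open>y\<close> onto the slice of \<open>D\<close> at height \<open>y\<close>. Hence
  every point of \<open>D\<close> lies on exactly one ruling, and \<open>u\<close> is the \<open>x\<close>-coordinate of the ruling
  there. The inverse \<open>(y, t) \<mapsto> s\<close> is Lipschitz and the slopes of the rulings are bounded, so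
  \<open>u\<close> is Lipschitz; towards \<open>\<partial>D\<close> it tends to \<open>\<phi>\<close>.\<close>

lemma dist_Pair_le_abs_sum: "dist (a::real, b::real) (c, d) \<le> \<bar>a - c\<bar> + \<bar>b - d\<bar>"
  by (simp add: dist_Pair_Pair dist_real_def sqrt_sum_squares_le_sum_abs)

lemma abs_mult_le_mult: "\<bar>x::real\<bar> \<le> a \<Longrightarrow> \<bar>y\<bar> \<le> b \<Longrightarrow> \<bar>x * y\<bar> \<le> a * b"
  by (simp add: abs_mult mult_mono order_trans[OF abs_ge_zero])

lemma exists_in_open_interval_near:
  assumes "0 < (b::real)" "s0 \<in> {0..b}" "0 < d"
  shows "\<exists>s\<in>{0<..<b}. \<bar>s - s0\<bar> \<le> d"
proof -
  define d' where "d' = min d (b / 4)"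
  have d': "0 < d'" "d' \<le> d" "d' \<le> b / 4" using assms by (auto simp: d'_def)
  show ?thesis
  proof (cases "s0 \<le> b / 2")
    case True
    then show ?thesis using d' assms by (intro bexI[of _ "s0 + d'"]) auto
  next
    case False
    then show ?thesis using d' assms by (intro bexI[of _ "s0 - d'"]) auto
  qed
qed

lemma divide_add_one_bounds:
  assumes "0 \<le> (C::real)" "0 < (e::real)"
  shows "0 < e / (C + 1)" "C * (e / (C + 1)) < e"
proof -
  show "0 < e / (C + 1)" using assms by simp
  have "C * e < (C + 1) * e" using assms by (simp add: algebra_simps)
  then show "C * (e / (C + 1)) < e" using assms by (simp add: field_simps)
qed

lemma lipschitz_on_approx:
  fixes f g :: "'a::metric_space \<Rightarrow> real"
  assumes L: "L-lipschitz_on B f"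
    and approx: "\<And>x e. x \<in> A \<Longrightarrow> 0 < e \<Longrightarrow> \<exists>x'\<in>B. dist x' x < e \<and> dist (f x') (g x) < e"
  shows "L-lipschitz_on A g"
proof (rule lipschitz_onI)
  show L0: "0 \<le> L" using L by (rule lipschitz_on_nonneg)
  fix x y assume x: "x \<in> A" and y: "y \<in> A"
  show "dist (g x) (g y) \<le> L * dist x y"
  proof (rule field_le_epsilon)
    fix e :: real assume e: "0 < e"
    define e' where "e' = e / (2 + 2 * L)"
    have e': "0 < e'" "e' * (2 + 2 * L) = e" using e L0 by (simp_all add: e'_def)
    obtain x' where x': "x' \<in> B" "dist x' x < e'" "dist (f x') (g x) < e'" using approx x e' by blast
    obtain y' where y': "y' \<in> B" "dist y' y < e'" "dist (f y') (g y) < e'" using approx y e' by blast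
    have "dist x' y' \<le> e' + dist x y + e'"
      using dist_triangle[of x' y' x] dist_triangle[of x y' y] x' y' by (simp add: dist_commute)
    then have "L * dist x' y' \<le> L * (e' + dist x y + e')" using L0 by (rule mult_left_mono)
    moreover have "dist (f x') (f y') \<le> L * dist x' y'" by (rule lipschitz_onD[OF L x'(1) y'(1)])
    moreover have "dist (g x) (g y) \<le> dist (f x') (g x) + dist (f x') (f y') + dist (f y') (g y)"
      using dist_triangle[of "g x" "g y" "f x'"] dist_triangle[of "f x'" "g y" "f y'"]
      by (simp add: dist_commute)
    ultimately have "dist (g x) (g y) \<le> e' + L * (e' + dist x y + e') + e'"
      using x' y' by linarith
    then show "dist (g x) (g y) \<le> L * dist x y + e"
      using e' by (simp add: algebra_simps)
  qed
qed

lemma lipschitz_on_Inf_constants: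
  assumes "\<exists>L. L-lipschitz_on U f"
  shows "(Inf {L. L-lipschitz_on U f})-lipschitz_on U f"
proof -
  define S where "S = {L. L-lipschitz_on U f}"
  have ne: "S \<noteq> {}" using assms by (auto simp: S_def)
  have "dist (f x) (f y) \<le> Inf S * dist x y" if x: "x \<in> U" and y: "y \<in> U" for x y
  proof (cases "dist x y = 0")
    case True
    then show ?thesis using assms x y by (auto simp: lipschitz_on_def)
  next
    case False
    then have dp: "0 < dist x y" by simp
    have "dist (f x) (f y) / dist x y \<le> Inf S"
    proof (rule cInf_greatest[OF ne])
      fix L assume "L \<in> S"
      then show "dist (f x) (f y) / dist x y \<le> L"
        using lipschitz_onD[OF _ x y] dp by (simp add: S_def pos_divide_le_eq)
    qed
    then show ?thesis using dp by (simp add: pos_divide_le_eq)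
  qed
  moreover have "0 \<le> Inf S"
    by (rule cInf_greatest[OF ne]) (auto simp: S_def lipschitz_on_def)
  ultimately show ?thesis unfolding S_def by (intro lipschitz_onI)
qed

lemma lipschitz_on_lip_const:
  assumes tb: "0 < tb" and cont: "continuous_on {0..tb} f" and lip: "\<exists>L. L-lipschitz_on {0<..<tb} f"
  shows "(lip_const tb f)-lipschitz_on {0..tb} f"
  using lipschitz_on_closure[OF lipschitz_on_Inf_constants[OF lip]] cont tb
  by (simp add: lip_const_def)

lemma abs_le_sup_norm:
  fixes f :: "real \<Rightarrow> real"
  assumes tb: "0 < tb" and cont: "continuous_on {0..tb} f" and s: "s \<in> {0..tb}"
  shows "\<bar>f s\<bar> \<le> sup_norm tb f"
proof -
  have "bounded (f ` {0..tb})" by (rule compact_imp_bounded[OF compact_continuous_image[OF cont]]) simp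
  then obtain B where "\<forall>x\<in>{0..tb}. \<bar>f x\<bar> \<le> B" unfolding bounded_real by auto
  then have bdd: "bdd_above ((\<lambda>s. \<bar>f s\<bar>) ` {0<..<tb})" by (auto intro!: bdd_aboveI[of _ B])
  have "{0<..<tb} \<subseteq> {0..tb} \<inter> (\<lambda>s. \<bar>f s\<bar>) -` {..sup_norm tb f}"
    unfolding sup_norm_def using cSUP_upper[OF _ bdd] by auto
  moreover have "closed ({0..tb} \<inter> (\<lambda>s. \<bar>f s\<bar>) -` {..sup_norm tb f})"
    by (rule continuous_closed_preimage[OF continuous_on_rabs[OF cont]]) auto
  ultimately have "closure {0<..<tb} \<subseteq> {0..tb} \<inter> (\<lambda>s. \<bar>f s\<bar>) -` {..sup_norm tb f}"
    by (rule closure_minimal)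
  then show ?thesis using tb s by auto
qed

lemma convex_on_less_between:
  fixes g :: "real \<Rightarrow> real"
  assumes cvx: "convex_on A g" and p: "p \<in> A" and q: "q \<in> A"
    and gp: "g p \<le> y" and gq: "g q < y" and r: "p < r \<and> r < q \<or> q < r \<and> r < p"
  shows "g r < y"
proof -
  define th where "th = (r - p) / (q - p)"
  have pq: "q - p \<noteq> 0" using r by auto
  have th: "0 < th" "th < 1" using r by (auto simp: th_def field_simps)
  have "th * (q - p) = r - p" using pq by (simp add: th_def)
  then have "r = (1 - th) * p + th * q" by (simp add: algebra_simps)
  then have "g r \<le> (1 - th) * g p + th * g q"
    using convex_onD[OF cvx, of th p q] th p q by simp
  also have "(1 - th) * g p \<le> (1 - th) * y" using th gp by (intro mult_left_mono) auto
  also have "th * g q < th * y" using th gq by simp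
  finally show ?thesis by (simp add: algebra_simps)
qed

lemma convex_on_less_iff_between:
  fixes g :: "real \<Rightarrow> real"
  assumes cvx: "convex_on A g" and mem: "\<alpha> \<in> A" "\<beta> \<in> A" "l0 \<in> A" "r \<in> A"
    and l0: "\<alpha> < l0" "l0 < \<beta>" and level: "g \<alpha> = y" "g \<beta> = y" "g l0 < y"
  shows "g r < y \<longleftrightarrow> \<alpha> < r \<and> r < \<beta>"
proof
  assume r: "g r < y"
  show "\<alpha> < r \<and> r < \<beta>"
  proof (rule ccontr)
    assume "\<not> (\<alpha> < r \<and> r < \<beta>)"
    then have "r < \<alpha> \<or> \<beta> < r" using r level by (cases "r = \<alpha> \<or> r = \<beta>") auto
    then have "g \<alpha> < y \<or> g \<beta> < y"
      using convex_on_less_between[OF cvx mem(4) mem(3), of y \<alpha>]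
        convex_on_less_between[OF cvx mem(4) mem(3), of y \<beta>] r l0 level by auto
    then show False using level by simp
  qed
next
  assume r: "\<alpha> < r \<and> r < \<beta>"
  show "g r < y"
  proof (cases r l0 rule: linorder_cases)
    case less
    then show ?thesis using convex_on_less_between[OF cvx mem(1) mem(3), of y r] r level by auto
  next
    case greater
    then show ?thesis using convex_on_less_between[OF cvx mem(2) mem(3), of y r] r level by auto
  qed (use level in simp)
qed

lemma convex_on_sublevel_interval:
  fixes g :: "real \<Rightarrow> real"
  assumes cvx: "convex_on {a..b} g" and cont: "continuous_on {a..b} g"
    and l0: "l0 \<in> {a<..<b}" and below: "g l0 < y" and ga: "y \<le> g a" and gb: "y \<le> g b"
  obtains \<alpha> \<beta> where "a \<le> \<alpha>" "\<alpha> < \<beta>" "\<beta> \<le> b" "g \<alpha> = y" "g \<beta> = y"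
    "\<And>r. r \<in> {a..b} \<Longrightarrow> g r < y \<longleftrightarrow> \<alpha> < r \<and> r < \<beta>"
proof -
  have "\<exists>x\<ge>a. x \<le> l0 \<and> g x = y"
    by (rule IVT2') (use below ga l0 in \<open>auto intro: continuous_on_subset[OF cont]\<close>)
  then obtain \<alpha> where \<alpha>: "a \<le> \<alpha>" "\<alpha> \<le> l0" "g \<alpha> = y" by auto
  have "\<exists>x\<ge>l0. x \<le> b \<and> g x = y"
    by (rule IVT') (use below gb l0 in \<open>auto intro: continuous_on_subset[OF cont]\<close>)
  then obtain \<beta> where \<beta>: "l0 \<le> \<beta>" "\<beta> \<le> b" "g \<beta> = y" by auto
  have \<alpha>l: "\<alpha> < l0" using \<alpha> below by (cases "\<alpha> = l0") auto
  have l\<beta>: "l0 < \<beta>" using \<beta> below by (cases "\<beta> = l0") auto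
  have mem: "\<alpha> \<in> {a..b}" "\<beta> \<in> {a..b}" "l0 \<in> {a..b}" using \<alpha> \<beta> l0 by auto
  show ?thesis
    using that[OF \<alpha>(1) order.strict_trans[OF \<alpha>l l\<beta>] \<beta>(2) \<alpha>(3) \<beta>(3)]
      convex_on_less_iff_between[OF cvx mem _ \<alpha>l l\<beta> \<alpha>(3) \<beta>(3) below] by blast
qed

lemma sq_div_add_lipschitz_left:
  fixes u1 u2 v :: real
  assumes "0 \<le> u1" "0 \<le> u2" "0 \<le> v"
  shows "\<bar>u1\<^sup>2 / (u1 + v) - u2\<^sup>2 / (u2 + v)\<bar> \<le> \<bar>u1 - u2\<bar>"
proof (cases "v = 0")
  case True
  have "u\<^sup>2 / u = u" for u :: real by (cases "u = 0") (simp_all add: power2_eq_square)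
  then show ?thesis using True by simp
next
  case False
  then have v: "0 < v" using assms by simp
  define N where "N = u1 * u2 + v * u1 + v * u2"
  define D where "D = (u1 + v) * (u2 + v)"
  have D: "0 < D" using assms v by (simp add: D_def)
  have eq: "u1\<^sup>2 / (u1 + v) - u2\<^sup>2 / (u2 + v) = (u1 - u2) * (N / D)"
    using assms v unfolding N_def D_def by (simp add: field_simps power2_eq_square)
  have r: "0 \<le> N / D" "N / D \<le> 1" using D assms v
    by (simp_all add: N_def D_def divide_le_eq_1 algebra_simps)
  have "\<bar>(u1 - u2) * (N / D)\<bar> = \<bar>u1 - u2\<bar> * (N / D)" by (simp only: abs_mult abs_of_nonneg[OF r(1)])
  also have "\<dots> \<le> \<bar>u1 - u2\<bar> * 1" using r by (intro mult_left_mono) auto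
  finally show ?thesis using eq by simp
qed

lemma sq_div_add_lipschitz_right:
  fixes u v1 v2 :: real
  assumes "0 \<le> u" "0 \<le> v1" "0 \<le> v2"
  shows "\<bar>u\<^sup>2 / (u + v1) - u\<^sup>2 / (u + v2)\<bar> \<le> \<bar>v1 - v2\<bar>"
proof (cases "u = 0")
  case True then show ?thesis by simp
next
  case False
  then have u: "0 < u" using assms by simp
  define D where "D = (u + v1) * (u + v2)"
  have D: "0 < D" using assms u by (simp add: D_def)
  have eq: "u\<^sup>2 / (u + v1) - u\<^sup>2 / (u + v2) = (v2 - v1) * (u\<^sup>2 / D)"
    using assms u unfolding D_def by (simp add: field_simps power2_eq_square)
  have r: "0 \<le> u\<^sup>2 / D" "u\<^sup>2 / D \<le> 1" using D assms u
    by (simp_all add: D_def divide_le_eq_1 algebra_simps power2_eq_square)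
  have "\<bar>(v2 - v1) * (u\<^sup>2 / D)\<bar> = \<bar>v2 - v1\<bar> * (u\<^sup>2 / D)" by (simp only: abs_mult abs_of_nonneg[OF r(1)])
  also have "\<dots> \<le> \<bar>v2 - v1\<bar> * 1" using r by (intro mult_left_mono) auto
  finally show ?thesis using eq by simp
qed

lemma sq_div_add_lipschitz:
  fixes u1 u2 v1 v2 :: real
  assumes "0 \<le> u1" "0 \<le> u2" "0 \<le> v1" "0 \<le> v2"
  shows "\<bar>u2\<^sup>2 / (u2 + v2) - u1\<^sup>2 / (u1 + v1)\<bar> \<le> \<bar>u2 - u1\<bar> + \<bar>v2 - v1\<bar>"
  using sq_div_add_lipschitz_right[of u2 v2 v1] sq_div_add_lipschitz_left[of u2 u1 v1] assms
  by linarith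

lemma sq_div_add_le:
  fixes u v :: real
  assumes "0 \<le> u" "0 \<le> v"
  shows "u\<^sup>2 / (u + v) \<le> u"
proof (cases "u = 0")
  case False
  then have "0 < u + v" using assms by simp
  then show ?thesis using assms by (simp add: divide_le_eq power2_eq_square algebra_simps)
qed simp

lemma mem_hplane_iff: "(X, Y, Z) \<in> hplane (x, y, t) \<longleftrightarrow> Z = 2 * y * X - 2 * x * Y"
proof -
  have "(X, Y, Z) \<in> hplane (x, y, t) \<longleftrightarrow> (\<exists>k j. (X, Y, Z) - k *\<^sub>R (1, 0, 2 * y) = j *\<^sub>R (0, 1, - 2 * x))"
    unfolding hplane_def by (simp add: span_insert span_singleton)
  also have "\<dots> \<longleftrightarrow> Z = 2 * y * X - 2 * x * Y"
    by (auto simp: algebra_simps)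
  finally show ?thesis .
qed

lemma sqrt_129_bound: "(sqrt 129 - 11) / 4 < (1/10::real)"
proof -
  have "sqrt 129 < sqrt ((57/5)\<^sup>2)" by (rule real_sqrt_less_mono) (simp add: power2_eq_square)
  then show ?thesis by simp
qed

section \<open>The domain \<open>D\<close>\<close>

locale lens_domain =
  fixes tb :: real and g1 g2 :: "real \<Rightarrow> real"
  assumes tb_pos: "0 < tb"
    and g1_cont: "continuous_on {0..tb} g1" and g2_cont: "continuous_on {0..tb} g2"
    and sign: "\<And>t. t \<in> {0<..<tb} \<Longrightarrow> g1 t < 0 \<and> 0 < g2 t"
    and ends: "g1 0 = 0" "g1 tb = 0" "g2 0 = 0" "g2 tb = 0"
    and g1_convex: "convex_on {0..tb} g1" and g2_concave: "concave_on {0..tb} g2"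
begin

lemma g1_nonpos: "s \<in> {0..tb} \<Longrightarrow> g1 s \<le> 0"
  using sign[of s] ends by (cases "s = 0 \<or> s = tb") force+

lemma g2_nonneg: "s \<in> {0..tb} \<Longrightarrow> 0 \<le> g2 s"
  using sign[of s] ends by (cases "s = 0 \<or> s = tb") force+

lemma continuous_on_gaps:
  "continuous_on (UNIV \<times> {0..tb}) (\<lambda>(y, t). (y - g1 t, g2 t - y))"
proof -
  have snd: "continuous_on (UNIV \<times> {0..tb}) (\<lambda>p. g (snd p))" if "continuous_on {0..tb} g" for g
    by (rule continuous_on_compose2[OF that]) (auto intro!: continuous_intros)
  show ?thesis
    unfolding case_prod_beta by (intro continuous_intros snd[OF g1_cont] snd[OF g2_cont])
qed

lemma open_domD: "open (domD tb g1 g2)"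
proof -
  have "domD tb g1 g2 = (UNIV \<times> {0<..<tb}) \<inter> (\<lambda>(y, t). (y - g1 t, g2 t - y)) -` ({0<..} \<times> {0<..})"
    unfolding domD_def by auto
  moreover have "continuous_on (UNIV \<times> {0<..<tb}) (\<lambda>(y, t). (y - g1 t, g2 t - y))"
    by (rule continuous_on_subset[OF continuous_on_gaps]) auto
  ultimately show ?thesis
    by (simp add: continuous_open_preimage open_Times)
qed

lemma closure_domD_subset:
  "closure (domD tb g1 g2) \<subseteq> {(y, t). t \<in> {0..tb} \<and> g1 t \<le> y \<and> y \<le> g2 t}"
proof (rule closure_minimal)
  show "domD tb g1 g2 \<subseteq> {(y, t). t \<in> {0..tb} \<and> g1 t \<le> y \<and> y \<le> g2 t}"
    unfolding domD_def by auto
  have "{(y, t). t \<in> {0..tb} \<and> g1 t \<le> y \<and> y \<le> g2 t}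
          = (UNIV \<times> {0..tb}) \<inter> (\<lambda>(y, t). (y - g1 t, g2 t - y)) -` ({0..} \<times> {0..})"
    by auto
  then show "closed {(y, t). t \<in> {0..tb} \<and> g1 t \<le> y \<and> y \<le> g2 t}"
    by (simp add: continuous_closed_preimage[OF continuous_on_gaps] closed_Times)
qed

text \<open>Each graph point ends a segment whose relative interior lies in the domain: the vertical
  segment over \<open>t\<close>, or, at \<open>t = 0, tb\<close>, the segment \<open>{0} \<times> [0, tb]\<close>.\<close>

lemma graphs_in_closure_domD:
  assumes t: "t \<in> {0..tb}"
  shows "(g1 t, t) \<in> closure (domD tb g1 g2)" "(g2 t, t) \<in> closure (domD tb g1 g2)"
proof -
  have "\<exists>a b. a \<noteq> b \<and> open_segment a b \<subseteq> domD tb g1 g2 \<and>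
          {(g1 t, t), (g2 t, t)} \<subseteq> closed_segment a b"
  proof (cases "t \<in> {0<..<tb}")
    case True
    have "open_segment (g1 t, t) (g2 t, t) \<subseteq> domD tb g1 g2"
    proof
      fix x assume "x \<in> open_segment (g1 t, t) (g2 t, t)"
      then obtain u where u: "0 < u" "u < 1" "x = ((1 - u) * g1 t + u * g2 t, t)"
        by (auto simp: in_segment algebra_simps)
      have "0 < u * (g2 t - g1 t)" "0 < (1 - u) * (g2 t - g1 t)" using sign[OF True] u by simp_all
      then show "x \<in> domD tb g1 g2" using True u by (simp add: domD_def algebra_simps)
    qed
    then show ?thesis using sign[OF True] by (intro exI[of _ "(g1 t, t)"] exI[of _ "(g2 t, t)"]) auto
  next
    case False
    then have "t = 0 \<or> t = tb" using t by auto
    then have "{(g1 t, t), (g2 t, t)} \<subseteq> closed_segment (0, 0) (0, tb)" using ends by auto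
    moreover have "open_segment (0, 0) (0, tb) \<subseteq> domD tb g1 g2"
    proof
      fix x assume "x \<in> open_segment (0, 0) (0::real, tb)"
      then obtain u where u: "0 < u" "u < 1" "x = (0, u * tb)" by (auto simp: in_segment)
      then have "u * tb \<in> {0<..<tb}" using tb_pos by simp
      then show "x \<in> domD tb g1 g2" using sign u by (simp add: domD_def)
    qed
    ultimately show ?thesis using tb_pos by (intro exI[of _ "(0, 0)"] exI[of _ "(0, tb)"]) auto
  qed
  then obtain a b where "a \<noteq> b" "open_segment a b \<subseteq> domD tb g1 g2"
    "{(g1 t, t), (g2 t, t)} \<subseteq> closed_segment a b" by blast
  then have "{(g1 t, t), (g2 t, t)} \<subseteq> closure (domD tb g1 g2)"
    by (metis closure_mono closure_open_segment order_trans)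
  then show "(g1 t, t) \<in> closure (domD tb g1 g2)" "(g2 t, t) \<in> closure (domD tb g1 g2)" by auto
qed

lemma frontier_domD:
  "frontier (domD tb g1 g2) = (\<lambda>t. (g1 t, t)) ` {0..tb} \<union> (\<lambda>t. (g2 t, t)) ` {0..tb}"
proof -
  have frontier: "frontier (domD tb g1 g2) = closure (domD tb g1 g2) - domD tb g1 g2"
    by (simp add: frontier_def interior_open[OF open_domD])
  show ?thesis
  proof
    show "frontier (domD tb g1 g2) \<subseteq> (\<lambda>t. (g1 t, t)) ` {0..tb} \<union> (\<lambda>t. (g2 t, t)) ` {0..tb}"
    proof
      fix q assume "q \<in> frontier (domD tb g1 g2)"
      then have cl: "q \<in> closure (domD tb g1 g2)" and notin: "q \<notin> domD tb g1 g2"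
        unfolding frontier by auto
      obtain y t where q: "q = (y, t)" by (cases q)
      have t: "t \<in> {0..tb}" and y: "g1 t \<le> y" "y \<le> g2 t" using closure_domD_subset cl q by auto
      have "y = g1 t \<or> y = g2 t"
      proof (cases "t \<in> {0<..<tb}")
        case True
        then show ?thesis using notin q y by (auto simp: domD_def)
      next
        case False
        then have "t = 0 \<or> t = tb" using t by auto
        then show ?thesis using y ends by auto
      qed
      then show "q \<in> (\<lambda>t. (g1 t, t)) ` {0..tb} \<union> (\<lambda>t. (g2 t, t)) ` {0..tb}" using q t by auto
    qed
    show "(\<lambda>t. (g1 t, t)) ` {0..tb} \<union> (\<lambda>t. (g2 t, t)) ` {0..tb} \<subseteq> frontier (domD tb g1 g2)"
      using graphs_in_closure_domD unfolding frontier by (auto simp: domD_def)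
  qed
qed

lemma continuous_on_phi_i:
  assumes "continuous_on (frontier (domD tb g1 g2)) phi"
  shows "continuous_on {0..tb} (phi_i phi g1)" "continuous_on {0..tb} (phi_i phi g2)"
  unfolding phi_i_def[abs_def]
  by (rule continuous_on_compose2[OF assms], auto simp: frontier_domD intro!: continuous_intros g1_cont g2_cont)+

lemma g1_sublevel_interval:
  assumes "l0 \<in> {0<..<tb}" "g1 l0 < y" "y \<le> 0"
  obtains \<alpha> \<beta> where "0 \<le> \<alpha>" "\<alpha> < \<beta>" "\<beta> \<le> tb" "g1 \<alpha> = y" "g1 \<beta> = y"
    "\<And>r. r \<in> {0..tb} \<Longrightarrow> g1 r < y \<longleftrightarrow> \<alpha> < r \<and> r < \<beta>"
  by (rule convex_on_sublevel_interval[OF g1_convex g1_cont assms(1,2)]) (use assms(3) ends that in auto)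

lemma g2_superlevel_interval:
  assumes "l0 \<in> {0<..<tb}" "y < g2 l0" "0 \<le> y"
  obtains \<alpha> \<beta> where "0 \<le> \<alpha>" "\<alpha> < \<beta>" "\<beta> \<le> tb" "g2 \<alpha> = y" "g2 \<beta> = y"
    "\<And>r. r \<in> {0..tb} \<Longrightarrow> y < g2 r \<longleftrightarrow> \<alpha> < r \<and> r < \<beta>"
proof -
  have cvx: "convex_on {0..tb} (\<lambda>x. - g2 x)" using g2_concave by (simp add: concave_on_def)
  show ?thesis
    by (rule convex_on_sublevel_interval[OF cvx continuous_on_minus[OF g2_cont] assms(1), of "- y"])
      (use assms(2,3) ends that in auto)
qed

lemma g1_linear_lower_bound: "\<exists>m>0. \<forall>s\<in>{0..tb}. m * min s (tb - s) \<le> - g1 s"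
proof -
  define c where "c = g1 (tb / 2)"
  have c: "c < 0" using sign[of "tb / 2"] tb_pos by (simp add: c_def)
  define m where "m = - 2 * c / tb"
  have m: "0 < m" using c tb_pos by (simp add: m_def divide_neg_pos)
  have "m * min s (tb - s) \<le> - g1 s" if s: "s \<in> {0..tb}" for s
  proof (cases "s \<le> tb / 2")
    case True
    define th where "th = 2 * s / tb"
    have th: "0 \<le> th" "th \<le> 1" using s True tb_pos by (auto simp: th_def field_simps)
    have "g1 ((1 - th) * 0 + th * (tb / 2)) \<le> (1 - th) * g1 0 + th * g1 (tb / 2)"
      using convex_onD[OF g1_convex th, of 0 "tb / 2"] tb_pos by simp
    moreover have "(1 - th) * 0 + th * (tb / 2) = s" using tb_pos by (simp add: th_def)
    ultimately have "g1 s \<le> th * c" using ends by (simp add: c_def)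
    moreover have "th * c = - (m * s)" using tb_pos by (simp add: th_def m_def field_simps)
    moreover have "m * min s (tb - s) \<le> m * s" using m by (intro mult_left_mono) auto
    ultimately show ?thesis by linarith
  next
    case False
    define th where "th = (2 * s - tb) / tb"
    have th: "0 \<le> th" "th \<le> 1" using s False tb_pos by (auto simp: th_def field_simps)
    have "g1 ((1 - th) * (tb / 2) + th * tb) \<le> (1 - th) * g1 (tb / 2) + th * g1 tb"
      using convex_onD[OF g1_convex th, of "tb / 2" tb] tb_pos by simp
    moreover have "(1 - th) * (tb / 2) + th * tb = s" using tb_pos by (simp add: th_def field_simps)
    ultimately have "g1 s \<le> (1 - th) * c" using ends by (simp add: c_def)
    moreover have "(1 - th) * c = - (m * (tb - s))" using tb_pos by (simp add: th_def m_def field_simps)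
    moreover have "m * min s (tb - s) \<le> m * (tb - s)" using m by (intro mult_left_mono) auto
    ultimately show ?thesis by linarith
  qed
  then show ?thesis using m by blast
qed

end

section \<open>The rulings of \<open>R\<^sub>\<phi>\<close>\<close>

locale ruled_surface = lens_domain +
  fixes phi :: "real \<times> real \<Rightarrow> real" and G Lg P Lp :: real
  assumes phi_cont: "continuous_on (frontier (domD tb g1 g2)) phi"
    and g_bound: "\<And>s. s \<in> {0..tb} \<Longrightarrow> \<bar>g1 s\<bar> \<le> G \<and> \<bar>g2 s\<bar> \<le> G"
    and f_bound: "\<And>s. s \<in> {0..tb} \<Longrightarrow> \<bar>phi_i phi g1 s\<bar> \<le> P \<and> \<bar>phi_i phi g2 s\<bar> \<le> P"
    and g_lip: "\<And>x y. x \<in> {0..tb} \<Longrightarrow> y \<in> {0..tb} \<Longrightarrow>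
                  \<bar>g1 x - g1 y\<bar> \<le> Lg * \<bar>x - y\<bar> \<and> \<bar>g2 x - g2 y\<bar> \<le> Lg * \<bar>x - y\<bar>"
    and f_lip: "\<And>x y. x \<in> {0..tb} \<Longrightarrow> y \<in> {0..tb} \<Longrightarrow>
                  \<bar>phi_i phi g1 x - phi_i phi g1 y\<bar> \<le> Lp * \<bar>x - y\<bar>
                \<and> \<bar>phi_i phi g2 x - phi_i phi g2 y\<bar> \<le> Lp * \<bar>x - y\<bar>"
    and nonneg: "0 \<le> G" "0 \<le> Lg" "0 \<le> P" "0 \<le> Lp"
    and small: "4 * (Lg * P + G * Lp) \<le> 1/10"
begin

abbreviation f1 where "f1 \<equiv> phi_i phi g1"
abbreviation f2 where "f2 \<equiv> phi_i phi g2"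

lemma f_cont: "continuous_on {0..tb} f1" "continuous_on {0..tb} f2"
  using continuous_on_phi_i[OF phi_cont] by auto

lemma f_ends: "f1 0 = f2 0" "f1 tb = f2 tb"
  using ends by (simp_all add: phi_i_def)

lemma small_le: "0 \<le> x \<Longrightarrow> 4 * (Lg * P + G * Lp) * x \<le> x / 10"
  using mult_right_mono[OF small] by simp

text \<open>\<open>horizontal_defect s l = 0\<close> says that \<open>p\<^sub>2(l) - p\<^sub>1(s)\<close> is horizontal at \<open>p\<^sub>1(s)\<close>, so its
  root \<open>partner s\<close> is the paper's \<open>\<lambda>(s)\<close> (see \<open>lam_eq_partner\<close>). It is an \<open>O(\<zeta>)\<close>-perturbation
  of \<open>l - s\<close>.\<close>

definition horizontal_defect where
  "horizontal_defect s l = l - s + 2 * (g2 l - g1 s) * (f2 l + f1 s)"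

lemma horizontal_defect_perturbation:
  assumes s1: "s1 \<in> {0..tb}" and s2: "s2 \<in> {0..tb}" and l1: "l1 \<in> {0..tb}" and l2: "l2 \<in> {0..tb}"
  shows "\<bar>(horizontal_defect s2 l2 - horizontal_defect s1 l1) - ((l2 - l1) - (s2 - s1))\<bar>
           \<le> 4 * (Lg * P + G * Lp) * (\<bar>l2 - l1\<bar> + \<bar>s2 - s1\<bar>)"
proof -
  define A where "A = (g2 l2 - g2 l1) - (g1 s2 - g1 s1)"
  define B where "B = f2 l2 + f1 s2"
  define C where "C = g2 l1 - g1 s1"
  define D where "D = (f2 l2 - f2 l1) + (f1 s2 - f1 s1)"
  have eq: "(horizontal_defect s2 l2 - horizontal_defect s1 l1) - ((l2 - l1) - (s2 - s1))
      = 2 * (A * B + C * D)"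
    by (simp add: horizontal_defect_def A_def B_def C_def D_def algebra_simps)
  have a1: "\<bar>g2 l2 - g2 l1\<bar> \<le> Lg * \<bar>l2 - l1\<bar>" and a2: "\<bar>g1 s2 - g1 s1\<bar> \<le> Lg * \<bar>s2 - s1\<bar>"
    using g_lip[OF l2 l1] g_lip[OF s2 s1] by simp_all
  have A: "\<bar>A\<bar> \<le> Lg * (\<bar>l2 - l1\<bar> + \<bar>s2 - s1\<bar>)"
    using a1 a2 unfolding A_def distrib_left by linarith
  have b1: "\<bar>f2 l2\<bar> \<le> P" and b2: "\<bar>f1 s2\<bar> \<le> P" using f_bound[OF l2] f_bound[OF s2] by simp_all
  have B: "\<bar>B\<bar> \<le> 2 * P" using b1 b2 unfolding B_def by linarith
  have c1: "\<bar>g2 l1\<bar> \<le> G" and c2: "\<bar>g1 s1\<bar> \<le> G" using g_bound[OF l1] g_bound[OF s1] by simp_all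
  have C: "\<bar>C\<bar> \<le> 2 * G" using c1 c2 unfolding C_def by linarith
  have d1: "\<bar>f2 l2 - f2 l1\<bar> \<le> Lp * \<bar>l2 - l1\<bar>" and d2: "\<bar>f1 s2 - f1 s1\<bar> \<le> Lp * \<bar>s2 - s1\<bar>"
    using f_lip[OF l2 l1] f_lip[OF s2 s1] by simp_all
  have D: "\<bar>D\<bar> \<le> Lp * (\<bar>l2 - l1\<bar> + \<bar>s2 - s1\<bar>)"
    using d1 d2 unfolding D_def distrib_left by linarith
  have "\<bar>2 * (A * B + C * D)\<bar> \<le> 2 * (\<bar>A * B\<bar> + \<bar>C * D\<bar>)" by simp
  also have "\<dots> \<le> 2 * (Lg * (\<bar>l2 - l1\<bar> + \<bar>s2 - s1\<bar>) * (2 * P) + (2 * G) * (Lp * (\<bar>l2 - l1\<bar> + \<bar>s2 - s1\<bar>)))"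
    using abs_mult_le_mult[OF A B] abs_mult_le_mult[OF C D] by simp
  also have "\<dots> = 4 * (Lg * P + G * Lp) * (\<bar>l2 - l1\<bar> + \<bar>s2 - s1\<bar>)" by (simp add: algebra_simps)
  finally show ?thesis unfolding eq .
qed

lemma horizontal_defect_strict_mono:
  assumes s: "s \<in> {0..tb}" and l1: "l1 \<in> {0..tb}" and l2: "l2 \<in> {0..tb}" and lt: "l1 < l2"
  shows "horizontal_defect s l1 < horizontal_defect s l2"
proof -
  have "\<bar>(horizontal_defect s l2 - horizontal_defect s l1) - (l2 - l1)\<bar> \<le> 4 * (Lg * P + G * Lp) * (l2 - l1)"
    using horizontal_defect_perturbation[OF s s l1 l2] lt by simp
  moreover have "4 * (Lg * P + G * Lp) * (l2 - l1) \<le> (l2 - l1) / 10" using lt by (intro small_le) simp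
  ultimately show ?thesis using lt by argo
qed

lemma horizontal_defect_at_0: assumes s: "s \<in> {0..tb}" shows "horizontal_defect s 0 \<le> 0"
proof -
  define E where "E = (0 - g1 s) * (f2 0 + f1 s)"
  have g: "\<bar>0 - g1 s\<bar> \<le> Lg * s" using g_lip[OF s, of 0] ends s by simp
  have f: "\<bar>f2 0 + f1 s\<bar> \<le> 2 * P" using f_bound[of 0] f_bound[OF s] tb_pos by fastforce
  have E: "\<bar>E\<bar> \<le> (Lg * s) * (2 * P)" unfolding E_def by (rule abs_mult_le_mult[OF g f])
  have z: "4 * (Lg * P + G * Lp) * s \<le> s / 10" using s by (intro small_le) simp
  have GL: "0 \<le> G * Lp * s" using nonneg s by simp
  have eq: "horizontal_defect s 0 = - s + 2 * E" unfolding horizontal_defect_def E_def using ends by simp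
  have "(Lg * s) * (2 * P) = 2 * (Lg * P * s)"
    "4 * (Lg * P + G * Lp) * s = 4 * (Lg * P * s) + 4 * (G * Lp * s)"
    by (simp_all add: algebra_simps)
  then show ?thesis using E z GL s eq unfolding abs_le_iff by argo
qed

lemma horizontal_defect_at_tb: assumes s: "s \<in> {0..tb}" shows "0 \<le> horizontal_defect s tb"
proof -
  define E where "E = (0 - g1 s) * (f2 tb + f1 s)"
  have g: "\<bar>0 - g1 s\<bar> \<le> Lg * (tb - s)" using g_lip[OF s, of tb] ends s tb_pos by simp
  have f: "\<bar>f2 tb + f1 s\<bar> \<le> 2 * P" using f_bound[of tb] f_bound[OF s] tb_pos by fastforce
  have E: "\<bar>E\<bar> \<le> (Lg * (tb - s)) * (2 * P)" unfolding E_def by (rule abs_mult_le_mult[OF g f])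
  have z: "4 * (Lg * P + G * Lp) * (tb - s) \<le> (tb - s) / 10" using s by (intro small_le) simp
  have GL: "0 \<le> G * Lp * (tb - s)" using nonneg s by simp
  have eq: "horizontal_defect s tb = tb - s + 2 * E" unfolding horizontal_defect_def E_def using ends by simp
  have "(Lg * (tb - s)) * (2 * P) = 2 * (Lg * P * (tb - s))"
    "4 * (Lg * P + G * Lp) * (tb - s) = 4 * (Lg * P * (tb - s)) + 4 * (G * Lp * (tb - s))"
    by (simp_all add: algebra_simps)
  then show ?thesis using E z GL s eq unfolding abs_le_iff by argo
qed

lemma ex1_horizontal_defect_root:
  assumes s: "s \<in> {0..tb}" shows "\<exists>!l. l \<in> {0..tb} \<and> horizontal_defect s l = 0"
proof -
  have "continuous_on {0..tb} (horizontal_defect s)"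
    unfolding horizontal_defect_def by (intro continuous_intros g2_cont f_cont)
  then have "\<exists>l\<ge>0. l \<le> tb \<and> horizontal_defect s l = 0"
    by (intro IVT') (simp_all add: horizontal_defect_at_0[OF s] horizontal_defect_at_tb[OF s]
        less_imp_le[OF tb_pos])
  then obtain l where l: "l \<in> {0..tb}" "horizontal_defect s l = 0" by auto
  have "l' = l" if l': "l' \<in> {0..tb}" "horizontal_defect s l' = 0" for l'
    using horizontal_defect_strict_mono[OF s l'(1) l(1)] horizontal_defect_strict_mono[OF s l(1) l'(1)] l l'
    by (cases l' l rule: linorder_cases) auto
  then show ?thesis using l by blast
qed

definition partner where "partner s = (THE l. l \<in> {0..tb} \<and> horizontal_defect s l = 0)"

lemma partner: assumes "s \<in> {0..tb}" shows "partner s \<in> {0..tb}" "horizontal_defect s (partner s) = 0"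
  using theI'[OF ex1_horizontal_defect_root[OF assms]] unfolding partner_def by auto

lemma partner_unique:
  assumes "s \<in> {0..tb}" "l \<in> {0..tb}" "horizontal_defect s l = 0" shows "partner s = l"
  using ex1_horizontal_defect_root[OF assms(1)] partner[OF assms(1)] assms by auto

lemma partner_eq:
  assumes "s \<in> {0..tb}" shows "partner s = s - 2 * (g2 (partner s) - g1 s) * (f1 s + f2 (partner s))"
  using partner(2)[OF assms] unfolding horizontal_defect_def by (simp add: algebra_simps)

lemma partner_0: "partner 0 = 0"
  by (rule partner_unique) (use tb_pos ends in \<open>auto simp: horizontal_defect_def\<close>)

lemma partner_tb: "partner tb = tb"
  by (rule partner_unique) (use tb_pos ends in \<open>auto simp: horizontal_defect_def\<close>)

lemma partner_perturbation:
  assumes s1: "s1 \<in> {0..tb}" and s2: "s2 \<in> {0..tb}"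
  shows "\<bar>(partner s2 - partner s1) - (s2 - s1)\<bar> \<le> (\<bar>partner s2 - partner s1\<bar> + \<bar>s2 - s1\<bar>) / 10"
proof -
  have "\<bar>(partner s2 - partner s1) - (s2 - s1)\<bar>
      \<le> 4 * (Lg * P + G * Lp) * (\<bar>partner s2 - partner s1\<bar> + \<bar>s2 - s1\<bar>)"
    using horizontal_defect_perturbation[OF s1 s2 partner(1)[OF s1] partner(1)[OF s2]]
      partner(2)[OF s1] partner(2)[OF s2] by simp
  also have "\<dots> \<le> (\<bar>partner s2 - partner s1\<bar> + \<bar>s2 - s1\<bar>) / 10" by (rule small_le) simp
  finally show ?thesis .
qed

lemma partner_lipschitz:
  "s1 \<in> {0..tb} \<Longrightarrow> s2 \<in> {0..tb} \<Longrightarrow> \<bar>partner s2 - partner s1\<bar> \<le> 2 * \<bar>s2 - s1\<bar>"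
  using partner_perturbation[of s1 s2] by argo

lemma partner_strict_mono:
  "s1 \<in> {0..tb} \<Longrightarrow> s2 \<in> {0..tb} \<Longrightarrow> s1 < s2 \<Longrightarrow> partner s1 < partner s2"
  using partner_perturbation[of s1 s2] by argo

lemma partner_less_iff:
  "s1 \<in> {0..tb} \<Longrightarrow> s2 \<in> {0..tb} \<Longrightarrow> partner s1 < partner s2 \<longleftrightarrow> s1 < s2"
  using partner_strict_mono[of s1 s2] partner_strict_mono[of s2 s1] by (cases s1 s2 rule: linorder_cases) auto

lemma partner_mono: "s1 \<in> {0..tb} \<Longrightarrow> s2 \<in> {0..tb} \<Longrightarrow> s1 \<le> s2 \<Longrightarrow> partner s1 \<le> partner s2"
  using partner_less_iff[of s2 s1] by linarith

lemma partner_cont: "continuous_on {0..tb} partner"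
  by (rule lipschitz_on_continuous_on[of 2])
    (auto intro!: lipschitz_onI simp: dist_real_def partner_lipschitz)

lemma partner_surj: assumes "l \<in> {0..tb}" shows "\<exists>s\<in>{0..tb}. partner s = l"
  using IVT'[of partner 0 l tb] partner_0 partner_tb assms tb_pos partner_cont by auto

lemma partner_open: assumes "s \<in> {0<..<tb}" shows "partner s \<in> {0<..<tb}"
  using partner_strict_mono[of 0 s] partner_strict_mono[of s tb] partner_0 partner_tb assms by auto

definition width where "width s = g2 (partner s) - g1 s"
definition jump where "jump s = f2 (partner s) - f1 s"

lemma width_pos: "s \<in> {0<..<tb} \<Longrightarrow> 0 < width s"
  using sign[of s] sign[OF partner_open[of s]] unfolding width_def by auto

lemma width_le: "s \<in> {0..tb} \<Longrightarrow> width s \<le> 2 * G"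
  using g_bound[of s] g_bound[OF partner(1)[of s]] unfolding width_def by fastforce

lemma jump_le: "s \<in> {0..tb} \<Longrightarrow> \<bar>jump s\<bar> \<le> 2 * P"
  using f_bound[of s] f_bound[OF partner(1)[of s]] unfolding jump_def by fastforce

lemma g2_partner_lipschitz:
  assumes s1: "s1 \<in> {0..tb}" and s2: "s2 \<in> {0..tb}"
  shows "\<bar>g2 (partner s2) - g2 (partner s1)\<bar> \<le> 2 * (Lg * \<bar>s2 - s1\<bar>)"
proof -
  have "\<bar>g2 (partner s2) - g2 (partner s1)\<bar> \<le> Lg * \<bar>partner s2 - partner s1\<bar>"
    using g_lip[OF partner(1)[OF s2] partner(1)[OF s1]] by simp
  also have "\<dots> \<le> Lg * (2 * \<bar>s2 - s1\<bar>)" using partner_lipschitz[OF s1 s2] nonneg by (intro mult_left_mono)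
  finally show ?thesis by simp
qed

lemma width_lipschitz:
  assumes s1: "s1 \<in> {0..tb}" and s2: "s2 \<in> {0..tb}"
  shows "\<bar>width s2 - width s1\<bar> \<le> 3 * (Lg * \<bar>s2 - s1\<bar>)"
  using g2_partner_lipschitz[OF s1 s2] g_lip[OF s2 s1] unfolding width_def by linarith

lemma jump_lipschitz:
  assumes s1: "s1 \<in> {0..tb}" and s2: "s2 \<in> {0..tb}"
  shows "\<bar>jump s2 - jump s1\<bar> \<le> 3 * (Lp * \<bar>s2 - s1\<bar>)"
proof -
  have "\<bar>f2 (partner s2) - f2 (partner s1)\<bar> \<le> Lp * \<bar>partner s2 - partner s1\<bar>"
    using f_lip[OF partner(1)[OF s2] partner(1)[OF s1]] by simp
  also have "\<dots> \<le> Lp * (2 * \<bar>s2 - s1\<bar>)" using partner_lipschitz[OF s1 s2] nonneg by (intro mult_left_mono)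
  finally show ?thesis using f_lip[OF s2 s1] unfolding jump_def by linarith
qed

text \<open>The point of the segment from \<open>p\<^sub>1(s)\<close> to \<open>p\<^sub>2(partner s)\<close> at height \<open>y\<close> is
  \<open>(ruling_x y s, y, ruling_t y s + 2 y ruling_x y s)\<close>, i.e. it lies on \<open>S\<^sub>u\<close> over the point
  \<open>(y, ruling_t y s)\<close> of \<open>\<bbbW>\<close> with \<open>u = ruling_x y s\<close> (see \<open>rho_eq\<close>).\<close>

definition ruling_t where
  "ruling_t y s = s - 4 * (y - g1 s) * f1 s - 2 * ((y - g1 s)\<^sup>2 / width s) * jump s"

definition ruling_x where "ruling_x y s = f1 s + jump s * ((y - g1 s) / width s)"

definition reaches where "reaches y s \<longleftrightarrow> s \<in> {0..tb} \<and> g1 s \<le> y \<and> y \<le> g2 (partner s)"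

lemma height_le_width: "reaches y s \<Longrightarrow> 0 \<le> y - g1 s \<and> y - g1 s \<le> width s"
  by (simp add: reaches_def width_def)

lemma sq_height_div_width_bounds:
  assumes "reaches y s"
  shows "0 \<le> (y - g1 s)\<^sup>2 / width s" "(y - g1 s)\<^sup>2 / width s \<le> 2 * G"
proof -
  have s: "s \<in> {0..tb}" using assms by (simp add: reaches_def)
  have U: "0 \<le> y - g1 s" "y - g1 s \<le> width s" using height_le_width[OF assms] by auto
  then show "0 \<le> (y - g1 s)\<^sup>2 / width s" by simp
  have "(y - g1 s)\<^sup>2 / width s \<le> y - g1 s"
    using sq_div_add_le[of "y - g1 s" "width s - (y - g1 s)"] U by simp
  then show "(y - g1 s)\<^sup>2 / width s \<le> 2 * G" using U width_le[OF s] by linarith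
qed

lemma sq_height_div_width_lipschitz:
  assumes v1: "reaches y1 s1" and v2: "reaches y2 s2"
  shows "\<bar>(y2 - g1 s2)\<^sup>2 / width s2 - (y1 - g1 s1)\<^sup>2 / width s1\<bar>
    \<le> 2 * \<bar>y2 - y1\<bar> + 3 * (Lg * \<bar>s2 - s1\<bar>)"
proof -
  have s1: "s1 \<in> {0..tb}" and s2: "s2 \<in> {0..tb}" using v1 v2 by (auto simp: reaches_def)
  define U1 where "U1 = y1 - g1 s1"
  define U2 where "U2 = y2 - g1 s2"
  define V1 where "V1 = g2 (partner s1) - y1"
  define V2 where "V2 = g2 (partner s2) - y2"
  have UV: "0 \<le> U1" "0 \<le> U2" "0 \<le> V1" "0 \<le> V2"
    using v1 v2 by (auto simp: reaches_def U1_def U2_def V1_def V2_def)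
  have w: "U1 + V1 = width s1" "U2 + V2 = width s2" by (simp_all add: U1_def U2_def V1_def V2_def width_def)
  have dU: "\<bar>U2 - U1\<bar> \<le> \<bar>y2 - y1\<bar> + Lg * \<bar>s2 - s1\<bar>"
    using g_lip[OF s2 s1] unfolding U1_def U2_def by linarith
  have dV: "\<bar>V2 - V1\<bar> \<le> \<bar>y2 - y1\<bar> + 2 * (Lg * \<bar>s2 - s1\<bar>)"
    using g2_partner_lipschitz[OF s1 s2] unfolding V1_def V2_def by linarith
  have "\<bar>U2\<^sup>2 / width s2 - U1\<^sup>2 / width s1\<bar> \<le> \<bar>U2 - U1\<bar> + \<bar>V2 - V1\<bar>"
    using sq_div_add_lipschitz[OF UV] unfolding w .
  then show ?thesis using dU dV unfolding U1_def U2_def by linarith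
qed

lemma ruling_t_perturbation:
  assumes v1: "reaches y1 s1" and v2: "reaches y2 s2"
  shows "\<bar>(ruling_t y2 s2 - ruling_t y1 s1) - (s2 - s1)\<bar> \<le> \<bar>s2 - s1\<bar> / 2 + 12 * P * \<bar>y2 - y1\<bar>"
proof -
  have s1: "s1 \<in> {0..tb}" and s2: "s2 \<in> {0..tb}" using v1 v2 by (auto simp: reaches_def)
  define U1 where "U1 = y1 - g1 s1"
  define U2 where "U2 = y2 - g1 s2"
  define Q1 where "Q1 = U1\<^sup>2 / width s1"
  define Q2 where "Q2 = U2\<^sup>2 / width s2"
  define ds where "ds = \<bar>s2 - s1\<bar>"
  define dy where "dy = \<bar>y2 - y1\<bar>"
  have "ruling_t y1 s1 = s1 - 4 * U1 * f1 s1 - 2 * Q1 * jump s1"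
    "ruling_t y2 s2 = s2 - 4 * U2 * f1 s2 - 2 * Q2 * jump s2"
    unfolding ruling_t_def U1_def U2_def Q1_def Q2_def by simp_all
  then have eq: "(ruling_t y2 s2 - ruling_t y1 s1) - (s2 - s1) = - 4 * ((U2 - U1) * f1 s2)
      - 4 * (U1 * (f1 s2 - f1 s1)) - 2 * ((Q2 - Q1) * jump s2) - 2 * (Q1 * (jump s2 - jump s1))"
    by (simp add: algebra_simps)
  have dU: "\<bar>U2 - U1\<bar> \<le> dy + Lg * ds" using g_lip[OF s2 s1] unfolding U1_def U2_def dy_def ds_def by linarith
  have U1b: "\<bar>U1\<bar> \<le> 2 * G" using height_le_width[OF v1] width_le[OF s1] unfolding U1_def by linarith
  have Q1b: "\<bar>Q1\<bar> \<le> 2 * G" using sq_height_div_width_bounds[OF v1] unfolding Q1_def U1_def by linarith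
  have dQ: "\<bar>Q2 - Q1\<bar> \<le> 2 * dy + 3 * (Lg * ds)"
    using sq_height_div_width_lipschitz[OF v1 v2] unfolding Q1_def Q2_def U1_def U2_def dy_def ds_def .
  have da: "\<bar>f1 s2 - f1 s1\<bar> \<le> Lp * ds" using f_lip[OF s2 s1] by (simp add: ds_def)
  have dW: "\<bar>jump s2 - jump s1\<bar> \<le> 3 * (Lp * ds)" using jump_lipschitz[OF s1 s2] by (simp add: ds_def)
  define A1 where "A1 = P * dy"
  define A2 where "A2 = Lg * P * ds"
  define A3 where "A3 = G * Lp * ds"
  have p1: "\<bar>(U2 - U1) * f1 s2\<bar> \<le> A1 + A2"
    using abs_mult_le_mult[OF dU conjunct1[OF f_bound[OF s2]]] unfolding A1_def A2_def by (simp add: algebra_simps)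
  have p2: "\<bar>U1 * (f1 s2 - f1 s1)\<bar> \<le> 2 * A3"
    using abs_mult_le_mult[OF U1b da] unfolding A3_def by (simp add: algebra_simps)
  have p3: "\<bar>(Q2 - Q1) * jump s2\<bar> \<le> 4 * A1 + 6 * A2"
    using abs_mult_le_mult[OF dQ jump_le[OF s2]] unfolding A1_def A2_def by (simp add: algebra_simps)
  have p4: "\<bar>Q1 * (jump s2 - jump s1)\<bar> \<le> 6 * A3"
    using abs_mult_le_mult[OF Q1b dW] unfolding A3_def by (simp add: algebra_simps)
  have "4 * (Lg * P + G * Lp) * ds \<le> ds / 10" by (rule small_le) (simp add: ds_def)
  then have z: "4 * A2 + 4 * A3 \<le> ds / 10" unfolding A2_def A3_def by (simp add: algebra_simps)
  have A2: "0 \<le> A2" using nonneg by (simp add: A2_def ds_def)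
  have "\<bar>(ruling_t y2 s2 - ruling_t y1 s1) - (s2 - s1)\<bar> \<le> 12 * A1 + ds / 2"
    unfolding eq using p1 p2 p3 p4 z A2 by argo
  then show ?thesis unfolding A1_def ds_def dy_def by (simp add: algebra_simps)
qed

lemma ruling_t_strict_mono:
  assumes "reaches y s1" "reaches y s2" "s1 < s2" shows "ruling_t y s1 < ruling_t y s2"
proof -
  have "\<bar>(ruling_t y s2 - ruling_t y s1) - (s2 - s1)\<bar> \<le> (s2 - s1) / 2"
    using ruling_t_perturbation[OF assms(1,2)] assms(3) by simp
  then show ?thesis using assms(3) unfolding abs_le_iff by argo
qed

lemma ruling_t_inj:
  assumes "reaches y s1" "reaches y s2" "ruling_t y s1 = ruling_t y s2" shows "s1 = s2"
  using ruling_t_strict_mono[OF assms(1,2)] ruling_t_strict_mono[OF assms(2,1)] assms(3)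
  by (cases s1 s2 rule: linorder_cases) auto

lemma ruling_t_continuous_on:
  assumes "\<And>s. s \<in> {a..b} \<Longrightarrow> reaches y s" shows "continuous_on {a..b} (ruling_t y)"
proof (rule lipschitz_on_continuous_on)
  show "(3/2)-lipschitz_on {a..b} (ruling_t y)"
  proof (rule lipschitz_onI)
    fix x z assume "x \<in> {a..b}" "z \<in> {a..b}"
    then have "\<bar>(ruling_t y x - ruling_t y z) - (x - z)\<bar> \<le> \<bar>x - z\<bar> / 2"
      using ruling_t_perturbation assms by fastforce
    then show "dist (ruling_t y x) (ruling_t y z) \<le> 3 / 2 * dist x z" unfolding dist_real_def by argo
  qed simp
qed

lemma ruling_t_top: assumes s: "s \<in> {0..tb}" and y: "g2 (partner s) = y" shows "ruling_t y s = partner s"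
proof -
  define U where "U = y - g1 s"
  have S: "width s = U" unfolding width_def U_def using y by simp
  have UU: "U\<^sup>2 / U = U" by (cases "U = 0") (simp_all add: power2_eq_square)
  have "ruling_t y s = s - 4 * U * f1 s - 2 * U * jump s" unfolding ruling_t_def S UU U_def[symmetric] by simp
  also have "\<dots> = s - 2 * U * (f1 s + f2 (partner s))" unfolding jump_def by (simp add: algebra_simps)
  also have "\<dots> = partner s" using partner_eq[OF s] y unfolding U_def by simp
  finally show ?thesis .
qed

lemma ruling_t_bottom: "g1 s = y \<Longrightarrow> ruling_t y s = s"
  unfolding ruling_t_def by simp

lemma ruling_window_nonneg:
  assumes y: "0 \<le> y" and t0: "(y, t0) \<in> domD tb g1 g2"
  obtains \<sigma>1 \<sigma>2 where "\<sigma>1 < \<sigma>2" "\<And>s. s \<in> {\<sigma>1..\<sigma>2} \<Longrightarrow> reaches y s"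
    "{s \<in> {0<..<tb}. g1 s < y \<and> y < g2 (partner s)} = {\<sigma>1<..<\<sigma>2}"
    "{t. (y, t) \<in> domD tb g1 g2} = {ruling_t y \<sigma>1<..<ruling_t y \<sigma>2}"
proof -
  have row: "t0 \<in> {0<..<tb}" "y < g2 t0" using t0 by (auto simp: domD_def)
  obtain \<alpha> \<beta> where \<alpha>\<beta>: "0 \<le> \<alpha>" "\<alpha> < \<beta>" "\<beta> \<le> tb" "g2 \<alpha> = y" "g2 \<beta> = y"
    and level: "\<And>r. r \<in> {0..tb} \<Longrightarrow> y < g2 r \<longleftrightarrow> \<alpha> < r \<and> r < \<beta>"
    by (erule g2_superlevel_interval[OF row y])
  obtain \<sigma>1 \<sigma>2 where \<sigma>: "\<sigma>1 \<in> {0..tb}" "partner \<sigma>1 = \<alpha>" "\<sigma>2 \<in> {0..tb}" "partner \<sigma>2 = \<beta>"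
    using partner_surj[of \<alpha>] partner_surj[of \<beta>] \<alpha>\<beta> by auto
  have less_iff: "\<sigma>1 < s \<longleftrightarrow> \<alpha> < partner s" "s < \<sigma>2 \<longleftrightarrow> partner s < \<beta>" if "s \<in> {0..tb}" for s
    using partner_less_iff[OF \<sigma>(1) that] partner_less_iff[OF that \<sigma>(3)] \<sigma> by auto
  have lt: "\<sigma>1 < \<sigma>2" using less_iff(1)[OF \<sigma>(3)] \<sigma> \<alpha>\<beta> by simp
  have reach: "reaches y s" if s: "s \<in> {\<sigma>1..\<sigma>2}" for s
  proof -
    have si: "s \<in> {0..tb}" using s \<sigma> by auto
    have "\<alpha> \<le> partner s" "partner s \<le> \<beta>"
      using partner_mono[OF \<sigma>(1) si] partner_mono[OF si \<sigma>(3)] s \<sigma>(2,4) by auto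
    then have "y \<le> g2 (partner s)" using level[OF partner(1)[OF si]] \<alpha>\<beta>
      by (cases "partner s = \<alpha> \<or> partner s = \<beta>") auto
    then show ?thesis using si g1_nonpos[OF si] y by (simp add: reaches_def)
  qed
  have strict: "s \<in> {0<..<tb} \<and> g1 s < y \<and> y < g2 (partner s) \<longleftrightarrow> s \<in> {\<sigma>1<..<\<sigma>2}" for s
  proof (cases "s \<in> {0..tb}")
    case True
    then show ?thesis using level[OF partner(1)[OF True]] less_iff[OF True] sign[of s] y \<sigma> by auto
  qed (use \<sigma> in auto)
  have row: "(y, t) \<in> domD tb g1 g2 \<longleftrightarrow> t \<in> {\<alpha><..<\<beta>}" for t
    using level[of t] sign[of t] y \<alpha>\<beta> by (auto simp: domD_def)
  have ends_t: "ruling_t y \<sigma>1 = \<alpha>" "ruling_t y \<sigma>2 = \<beta>" using ruling_t_top \<sigma> \<alpha>\<beta> by auto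
  show ?thesis
  proof (rule that)
    show "{s \<in> {0<..<tb}. g1 s < y \<and> y < g2 (partner s)} = {\<sigma>1<..<\<sigma>2}"
      by (rule set_eqI) (use strict in blast)
    show "{t. (y, t) \<in> domD tb g1 g2} = {ruling_t y \<sigma>1<..<ruling_t y \<sigma>2}"
      unfolding ends_t by (rule set_eqI) (use row in blast)
  qed (use lt reach in auto)
qed

lemma ruling_window_neg:
  assumes y: "y < 0" and t0: "(y, t0) \<in> domD tb g1 g2"
  obtains \<sigma>1 \<sigma>2 where "\<sigma>1 < \<sigma>2" "\<And>s. s \<in> {\<sigma>1..\<sigma>2} \<Longrightarrow> reaches y s"
    "{s \<in> {0<..<tb}. g1 s < y \<and> y < g2 (partner s)} = {\<sigma>1<..<\<sigma>2}"
    "{t. (y, t) \<in> domD tb g1 g2} = {ruling_t y \<sigma>1<..<ruling_t y \<sigma>2}"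
proof -
  have row: "t0 \<in> {0<..<tb}" "g1 t0 < y" using t0 by (auto simp: domD_def)
  obtain \<alpha> \<beta> where \<alpha>\<beta>: "0 \<le> \<alpha>" "\<alpha> < \<beta>" "\<beta> \<le> tb" "g1 \<alpha> = y" "g1 \<beta> = y"
    and level: "\<And>r. r \<in> {0..tb} \<Longrightarrow> g1 r < y \<longleftrightarrow> \<alpha> < r \<and> r < \<beta>"
    by (erule g1_sublevel_interval[OF row less_imp_le[OF y]])
  have reach: "reaches y s" if s: "s \<in> {\<alpha>..\<beta>}" for s
  proof -
    have si: "s \<in> {0..tb}" using s \<alpha>\<beta> by auto
    have "g1 s \<le> y" using level[OF si] \<alpha>\<beta> s by (cases "s = \<alpha> \<or> s = \<beta>") auto
    then show ?thesis using si g2_nonneg[OF partner(1)[OF si]] y by (simp add: reaches_def)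
  qed
  have strict: "s \<in> {0<..<tb} \<and> g1 s < y \<and> y < g2 (partner s) \<longleftrightarrow> s \<in> {\<alpha><..<\<beta>}" for s
  proof (cases "s \<in> {0<..<tb}")
    case True
    then show ?thesis using level[of s] sign[OF partner_open[OF True]] y by auto
  qed (use \<alpha>\<beta> in auto)
  have row: "(y, t) \<in> domD tb g1 g2 \<longleftrightarrow> t \<in> {\<alpha><..<\<beta>}" for t
    using level[of t] sign[of t] y \<alpha>\<beta> by (auto simp: domD_def)
  have ends_t: "ruling_t y \<alpha> = \<alpha>" "ruling_t y \<beta> = \<beta>"
    using ruling_t_bottom[OF \<alpha>\<beta>(4)] ruling_t_bottom[OF \<alpha>\<beta>(5)] by simp_all
  show ?thesis
  proof (rule that)
    show "{s \<in> {0<..<tb}. g1 s < y \<and> y < g2 (partner s)} = {\<alpha><..<\<beta>}"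
      by (rule set_eqI) (use strict in blast)
    show "{t. (y, t) \<in> domD tb g1 g2} = {ruling_t y \<alpha><..<ruling_t y \<beta>}"
      unfolding ends_t by (rule set_eqI) (use row in blast)
  qed (use \<alpha>\<beta>(2) reach in auto)
qed

lemma ruling_window:
  assumes "(y, t0) \<in> domD tb g1 g2"
  obtains \<sigma>1 \<sigma>2 where "\<sigma>1 < \<sigma>2" "\<And>s. s \<in> {\<sigma>1..\<sigma>2} \<Longrightarrow> reaches y s"
    "{s \<in> {0<..<tb}. g1 s < y \<and> y < g2 (partner s)} = {\<sigma>1<..<\<sigma>2}"
    "{t. (y, t) \<in> domD tb g1 g2} = {ruling_t y \<sigma>1<..<ruling_t y \<sigma>2}"
proof (cases "0 \<le> y")
  case True
  show ?thesis by (rule ruling_window_nonneg[OF True assms that])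
next
  case False
  then have "y < 0" by simp
  show ?thesis by (rule ruling_window_neg[OF \<open>y < 0\<close> assms that])
qed

lemma ruling_t_mem_domD:
  assumes s: "s \<in> {0<..<tb}" and y: "g1 s < y" "y < g2 (partner s)"
  shows "(y, ruling_t y s) \<in> domD tb g1 g2"
proof -
  have "\<exists>t0. (y, t0) \<in> domD tb g1 g2"
  proof (cases "0 \<le> y")
    case True
    then have "(y, partner s) \<in> domD tb g1 g2"
      using partner_open[OF s] sign[OF partner_open[OF s]] y by (auto simp: domD_def)
    then show ?thesis ..
  next
    case False
    then have "(y, s) \<in> domD tb g1 g2" using s sign[OF s] y by (auto simp: domD_def)
    then show ?thesis ..
  qed
  then obtain t0 where t0: "(y, t0) \<in> domD tb g1 g2" ..
  obtain \<sigma>1 \<sigma>2 where \<sigma>: "\<sigma>1 < \<sigma>2" "\<And>s. s \<in> {\<sigma>1..\<sigma>2} \<Longrightarrow> reaches y s"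
    "{s \<in> {0<..<tb}. g1 s < y \<and> y < g2 (partner s)} = {\<sigma>1<..<\<sigma>2}"
    "{t. (y, t) \<in> domD tb g1 g2} = {ruling_t y \<sigma>1<..<ruling_t y \<sigma>2}"
    by (erule ruling_window[OF t0])
  have "s \<in> {\<sigma>1<..<\<sigma>2}" using \<sigma>(3) s y by blast
  then have "ruling_t y \<sigma>1 < ruling_t y s" "ruling_t y s < ruling_t y \<sigma>2"
    using ruling_t_strict_mono \<sigma>(2) by auto
  then show ?thesis using \<sigma>(4) by auto
qed

lemma ex_ruling_through:
  assumes yt: "(y, t) \<in> domD tb g1 g2"
  shows "\<exists>s\<in>{0<..<tb}. g1 s < y \<and> y < g2 (partner s) \<and> ruling_t y s = t"
proof -
  obtain \<sigma>1 \<sigma>2 where \<sigma>: "\<sigma>1 < \<sigma>2" "\<And>s. s \<in> {\<sigma>1..\<sigma>2} \<Longrightarrow> reaches y s"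
    "{s \<in> {0<..<tb}. g1 s < y \<and> y < g2 (partner s)} = {\<sigma>1<..<\<sigma>2}"
    "{t. (y, t) \<in> domD tb g1 g2} = {ruling_t y \<sigma>1<..<ruling_t y \<sigma>2}"
    by (erule ruling_window[OF yt])
  have t: "ruling_t y \<sigma>1 < t" "t < ruling_t y \<sigma>2" using \<sigma>(4) yt by auto
  have "\<exists>s\<ge>\<sigma>1. s \<le> \<sigma>2 \<and> ruling_t y s = t"
    by (rule IVT') (use t \<sigma>(1) ruling_t_continuous_on[OF \<sigma>(2)] in auto)
  then obtain s where s: "s \<in> {\<sigma>1..\<sigma>2}" "ruling_t y s = t" by auto
  then have "s \<noteq> \<sigma>1" "s \<noteq> \<sigma>2" using t by auto
  then have "s \<in> {\<sigma>1<..<\<sigma>2}" using s(1) by auto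
  then have "s \<in> {0<..<tb} \<and> g1 s < y \<and> y < g2 (partner s)" using \<sigma>(3) by blast
  then show ?thesis using s(2) by blast
qed

definition ruling where
  "ruling y t = (THE s. s \<in> {0<..<tb} \<and> g1 s < y \<and> y < g2 (partner s) \<and> ruling_t y s = t)"

lemma ex1_ruling_through:
  assumes "(y, t) \<in> domD tb g1 g2"
  shows "\<exists>!s. s \<in> {0<..<tb} \<and> g1 s < y \<and> y < g2 (partner s) \<and> ruling_t y s = t"
proof -
  have "s' = s" if "s' \<in> {0<..<tb} \<and> g1 s' < y \<and> y < g2 (partner s') \<and> ruling_t y s' = t"
      "s \<in> {0<..<tb} \<and> g1 s < y \<and> y < g2 (partner s) \<and> ruling_t y s = t" for s s'
    using ruling_t_inj[of y s' s] that by (auto simp: reaches_def)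
  then show ?thesis using ex_ruling_through[OF assms] by blast
qed

lemma ruling:
  assumes "(y, t) \<in> domD tb g1 g2"
  shows "ruling y t \<in> {0<..<tb}" "g1 (ruling y t) < y" "y < g2 (partner (ruling y t))"
    "ruling_t y (ruling y t) = t"
  using theI'[OF ex1_ruling_through[OF assms]] unfolding ruling_def by auto

lemma ruling_ruling_t:
  assumes "s \<in> {0<..<tb}" "g1 s < y" "y < g2 (partner s)" shows "ruling y (ruling_t y s) = s"
  using ex1_ruling_through[OF ruling_t_mem_domD[OF assms]] ruling[OF ruling_t_mem_domD[OF assms]] assms
  by blast

definition graph_fun where "graph_fun p = ruling_x (fst p) (ruling (fst p) (snd p))"

lemma jump_le_min:
  assumes s: "s \<in> {0..tb}" shows "\<bar>jump s\<bar> \<le> 3 * Lp * min s (tb - s)"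
proof -
  have z: "0 \<in> {0..tb}" and t: "tb \<in> {0..tb}" using tb_pos by auto
  have "\<bar>jump s - jump 0\<bar> \<le> 3 * (Lp * \<bar>s - 0\<bar>)" by (rule jump_lipschitz[OF z s])
  moreover have "\<bar>jump tb - jump s\<bar> \<le> 3 * (Lp * \<bar>tb - s\<bar>)" by (rule jump_lipschitz[OF s t])
  moreover have "jump 0 = 0" "jump tb = 0" using f_ends by (simp_all add: jump_def partner_0 partner_tb)
  ultimately show ?thesis using s by (auto simp: min_def)
qed

text \<open>The slopes \<open>jump / width\<close> of the rulings stay bounded: the jump vanishes at both ends at a
  Lipschitz rate, while by convexity the width grows at least linearly there.\<close>

lemma jump_le_width: "\<exists>K\<ge>0. \<forall>s\<in>{0..tb}. \<bar>jump s\<bar> \<le> K * width s"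
proof -
  obtain m where m: "0 < m" "\<And>s. s \<in> {0..tb} \<Longrightarrow> m * min s (tb - s) \<le> - g1 s"
    using g1_linear_lower_bound by blast
  define K where "K = 3 * Lp / m"
  have K: "0 \<le> K" using m nonneg by (simp add: K_def)
  have "\<bar>jump s\<bar> \<le> K * width s" if s: "s \<in> {0..tb}" for s
  proof -
    have "\<bar>jump s\<bar> \<le> K * (m * min s (tb - s))" using jump_le_min[OF s] m by (simp add: K_def)
    also have "\<dots> \<le> K * (- g1 s)" using m(2)[OF s] K by (rule mult_left_mono)
    also have "\<dots> \<le> K * width s"
      using K g2_nonneg[OF partner(1)[OF s]] by (intro mult_left_mono) (auto simp: width_def)
    finally show ?thesis .
  qed
  then show ?thesis using K by blast
qed

lemma ruling_x_lipschitz: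
  assumes K: "0 \<le> K" "\<forall>s\<in>{0..tb}. \<bar>jump s\<bar> \<le> K * width s"
    and v1: "reaches y1 s1" and v2: "reaches y2 s2" and o1: "s1 \<in> {0<..<tb}" and o2: "s2 \<in> {0<..<tb}"
  shows "\<bar>ruling_x y2 s2 - ruling_x y1 s1\<bar> \<le> (4 * Lp + 4 * K * Lg) * \<bar>s2 - s1\<bar> + K * \<bar>y2 - y1\<bar>"
proof -
  have s1: "s1 \<in> {0..tb}" and s2: "s2 \<in> {0..tb}" using v1 v2 by (auto simp: reaches_def)
  define U1 where "U1 = y1 - g1 s1"
  define U2 where "U2 = y2 - g1 s2"
  define S1 where "S1 = width s1"
  define S2 where "S2 = width s2"
  define h2 where "h2 = U2 / S2"
  define a1 where "a1 = f1 s1"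
  define a2 where "a2 = f1 s2"
  define W1 where "W1 = jump s1"
  define W2 where "W2 = jump s2"
  define ds where "ds = \<bar>s2 - s1\<bar>"
  define dy where "dy = \<bar>y2 - y1\<bar>"
  have S1p: "0 < S1" using width_pos[OF o1] by (simp add: S1_def)
  have S2p: "0 < S2" using width_pos[OF o2] by (simp add: S2_def)
  have U2S2: "0 \<le> U2" "U2 \<le> S2" using v2 unfolding U2_def S2_def reaches_def width_def by auto
  have h2: "0 \<le> h2" "h2 \<le> 1" unfolding h2_def using U2S2 S2p
    by (simp_all add: divide_nonneg_pos divide_le_eq_1_pos)
  have X1: "ruling_x y1 s1 = a1 + W1 * (U1 / S1)" unfolding ruling_x_def a1_def W1_def U1_def S1_def by simp
  have X2: "ruling_x y2 s2 = a2 + W2 * h2" unfolding ruling_x_def a2_def W2_def U2_def S2_def h2_def by simp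
  have hS2: "h2 * S2 = U2" using S2p by (simp add: h2_def)
  have e1: "(U2 - U1) - h2 * (S2 - S1) = h2 * S1 - U1" using hS2 by (simp add: algebra_simps)
  have e2: "(W1 / S1) * (h2 * S1 - U1) = W1 * h2 - W1 * (U1 / S1)" using S1p by (simp add: field_simps)
  have eq: "ruling_x y2 s2 - ruling_x y1 s1 = (a2 - a1) + (W2 - W1) * h2 + (W1 / S1) * ((U2 - U1) - h2 * (S2 - S1))"
    unfolding X1 X2 e1 e2 by (simp add: algebra_simps)
  have dU: "\<bar>U2 - U1\<bar> \<le> dy + Lg * ds" using g_lip[OF s2 s1] unfolding U1_def U2_def dy_def ds_def by linarith
  have dS: "\<bar>S2 - S1\<bar> \<le> 3 * (Lg * ds)" using width_lipschitz[OF s1 s2] by (simp add: S1_def S2_def ds_def)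
  have h2abs: "\<bar>h2\<bar> \<le> 1" using h2 by simp
  have hS: "\<bar>h2 * (S2 - S1)\<bar> \<le> 3 * (Lg * ds)" using abs_mult_le_mult[OF h2abs dS] by simp
  have E: "\<bar>(U2 - U1) - h2 * (S2 - S1)\<bar> \<le> dy + 4 * (Lg * ds)" using dU hS by linarith
  have WK: "\<bar>W1 / S1\<bar> \<le> K"
    using K(2) s1 S1p by (simp add: W1_def S1_def abs_divide pos_divide_le_eq)
  have da: "\<bar>a2 - a1\<bar> \<le> Lp * ds" using f_lip[OF s2 s1] by (simp add: a1_def a2_def ds_def)
  have dW: "\<bar>W2 - W1\<bar> \<le> 3 * (Lp * ds)" using jump_lipschitz[OF s1 s2] by (simp add: W1_def W2_def ds_def)
  have p1: "\<bar>(W2 - W1) * h2\<bar> \<le> 3 * (Lp * ds)" using abs_mult_le_mult[OF dW h2abs] by simp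
  have p2: "\<bar>(W1 / S1) * ((U2 - U1) - h2 * (S2 - S1))\<bar> \<le> K * (dy + 4 * (Lg * ds))"
    by (rule abs_mult_le_mult[OF WK E])
  have "\<bar>ruling_x y2 s2 - ruling_x y1 s1\<bar> \<le> Lp * ds + 3 * (Lp * ds) + K * (dy + 4 * (Lg * ds))"
    unfolding eq using da p1 p2 by argo
  then show ?thesis unfolding ds_def dy_def by (simp add: algebra_simps)
qed

lemma ruling_lipschitz:
  assumes p: "(y1, t1) \<in> domD tb g1 g2" and q: "(y2, t2) \<in> domD tb g1 g2"
  shows "\<bar>ruling y2 t2 - ruling y1 t1\<bar> \<le> (2 + 24 * P) * dist (y1, t1) (y2, t2)"
proof -
  define d where "d = dist (y1, t1) (y2, t2)"
  have v: "reaches y1 (ruling y1 t1)" "reaches y2 (ruling y2 t2)"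
    using ruling[OF p] ruling[OF q] by (auto simp: reaches_def)
  have dy: "\<bar>y2 - y1\<bar> \<le> d" and dt: "\<bar>t2 - t1\<bar> \<le> d"
    using dist_fst_le[of "(y1, t1)" "(y2, t2)"] dist_snd_le[of "(y1, t1)" "(y2, t2)"]
    by (simp_all add: d_def dist_real_def abs_minus_commute)
  have "\<bar>(t2 - t1) - (ruling y2 t2 - ruling y1 t1)\<bar> \<le> \<bar>ruling y2 t2 - ruling y1 t1\<bar> / 2 + 12 * P * \<bar>y2 - y1\<bar>"
    using ruling_t_perturbation[OF v] ruling(4)[OF p] ruling(4)[OF q] by simp
  then have "\<bar>ruling y2 t2 - ruling y1 t1\<bar> \<le> 2 * \<bar>t2 - t1\<bar> + 24 * (P * \<bar>y2 - y1\<bar>)" by argo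
  moreover have "P * \<bar>y2 - y1\<bar> \<le> P * d" using dy nonneg by (intro mult_left_mono) auto
  ultimately show ?thesis using dt unfolding d_def by (simp add: algebra_simps)
qed

lemma graph_fun_lipschitz: "\<exists>L. L-lipschitz_on (domD tb g1 g2) graph_fun"
proof -
  obtain K where K: "0 \<le> K" "\<forall>s\<in>{0..tb}. \<bar>jump s\<bar> \<le> K * width s" using jump_le_width by blast
  define C where "C = 4 * Lp + 4 * K * Lg"
  have C: "0 \<le> C" using K nonneg by (simp add: C_def)
  define L where "L = C * (2 + 24 * P) + K"
  have "dist (graph_fun p) (graph_fun q) \<le> L * dist p q"
    if p: "p \<in> domD tb g1 g2" and q: "q \<in> domD tb g1 g2" for p q
  proof -
    obtain y1 t1 y2 t2 where pq: "p = (y1, t1)" "q = (y2, t2)" by (cases p, cases q)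
    define s1 where "s1 = ruling y1 t1"
    define s2 where "s2 = ruling y2 t2"
    have S: "s1 \<in> {0<..<tb}" "reaches y1 s1" "s2 \<in> {0<..<tb}" "reaches y2 s2"
      using ruling[of y1 t1] ruling[of y2 t2] p q pq by (auto simp: s1_def s2_def reaches_def)
    have dy: "\<bar>y2 - y1\<bar> \<le> dist p q"
      using dist_fst_le[of p q] by (simp add: pq dist_real_def abs_minus_commute)
    have ds: "\<bar>s2 - s1\<bar> \<le> (2 + 24 * P) * dist p q"
      using ruling_lipschitz[of y1 t1 y2 t2] p q by (simp add: pq s1_def s2_def)
    have "\<bar>ruling_x y2 s2 - ruling_x y1 s1\<bar> \<le> C * \<bar>s2 - s1\<bar> + K * \<bar>y2 - y1\<bar>"
      using ruling_x_lipschitz[OF K S(2,4,1,3)] by (simp add: C_def)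
    also have "\<dots> \<le> C * ((2 + 24 * P) * dist p q) + K * dist p q"
      using ds dy C K(1) by (intro add_mono mult_left_mono)
    finally show ?thesis
      by (simp add: graph_fun_def pq s1_def s2_def L_def dist_real_def abs_minus_commute algebra_simps)
  qed
  moreover have "0 \<le> L" using C K nonneg by (simp add: L_def)
  ultimately have "L-lipschitz_on (domD tb g1 g2) graph_fun" by (intro lipschitz_onI)
  then show ?thesis ..
qed

lemma ruling_point:
  assumes s: "s \<in> {0<..<tb}" and h: "0 < h" "h < 1" and y: "y = g1 s + h * width s"
  shows "g1 s < y" "y < g2 (partner s)" "(y, ruling_t y s) \<in> domD tb g1 g2"
    "graph_fun (y, ruling_t y s) = f1 s + jump s * h"
    "ruling_t y s = s - 4 * h * (width s * f1 s) - 2 * h\<^sup>2 * (width s * jump s)"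
proof -
  have S: "0 < width s" by (rule width_pos[OF s])
  show a: "g1 s < y" using S h y by simp
  have "y = g2 (partner s) - (1 - h) * width s" using y by (simp add: width_def algebra_simps)
  then show b: "y < g2 (partner s)" using S h by simp
  show "(y, ruling_t y s) \<in> domD tb g1 g2" by (rule ruling_t_mem_domD[OF s a b])
  have U: "y - g1 s = h * width s" using y by simp
  have "graph_fun (y, ruling_t y s) = ruling_x y s" using ruling_ruling_t[OF s a b] by (simp add: graph_fun_def)
  also have "\<dots> = f1 s + jump s * h" unfolding ruling_x_def U using S by simp
  finally show "graph_fun (y, ruling_t y s) = f1 s + jump s * h" .
  have "(h * width s)\<^sup>2 / width s = h\<^sup>2 * width s" using S by (simp add: power2_eq_square)
  then show "ruling_t y s = s - 4 * h * (width s * f1 s) - 2 * h\<^sup>2 * (width s * jump s)"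
    unfolding ruling_t_def U by (simp add: algebra_simps)
qed

lemma ruling_point_near_bottom:
  assumes s: "s \<in> {0<..<tb}" and h: "0 < h" "h < 1" and y: "y = g1 s + h * width s"
  shows "(y, ruling_t y s) \<in> domD tb g1 g2" "\<bar>y - g1 s\<bar> \<le> 2 * G * h"
    "\<bar>ruling_t y s - s\<bar> \<le> 16 * (G * P) * h" "\<bar>graph_fun (y, ruling_t y s) - f1 s\<bar> \<le> 2 * P * h"
proof -
  note R = ruling_point[OF s h y]
  have si: "s \<in> {0..tb}" using s by auto
  have S: "0 < width s" "width s \<le> 2 * G" using width_pos[OF s] width_le[OF si] by simp_all
  have Sa: "\<bar>width s * f1 s\<bar> \<le> 2 * G * P"
    using abs_mult_le_mult[OF _ conjunct1[OF f_bound[OF si]], of "width s" "2 * G"] S by simp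
  have SW: "\<bar>width s * jump s\<bar> \<le> 2 * G * (2 * P)"
    using abs_mult_le_mult[OF _ jump_le[OF si], of "width s" "2 * G"] S by simp
  have "\<bar>4 * h\<bar> \<le> 4 * h" "\<bar>2 * h\<^sup>2\<bar> \<le> 2 * h"
    using h by (simp_all add: power2_eq_square mult_left_le_one_le)
  from abs_mult_le_mult[OF this(1) Sa] abs_mult_le_mult[OF this(2) SW]
  have "\<bar>4 * h * (width s * f1 s)\<bar> \<le> 8 * (G * P) * h"
    "\<bar>2 * h\<^sup>2 * (width s * jump s)\<bar> \<le> 8 * (G * P) * h"
    by (simp_all add: algebra_simps)
  then show "\<bar>ruling_t y s - s\<bar> \<le> 16 * (G * P) * h" using R(5) by argo
  show "(y, ruling_t y s) \<in> domD tb g1 g2" by (rule R(3))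
  have "y - g1 s = h * width s" "0 \<le> h * width s" "h * width s \<le> h * (2 * G)"
    using S h by (simp_all add: y mult_left_mono)
  then show "\<bar>y - g1 s\<bar> \<le> 2 * G * h" by (simp add: algebra_simps)
  show "\<bar>graph_fun (y, ruling_t y s) - f1 s\<bar> \<le> 2 * P * h"
    using R(4) abs_mult_le_mult[OF jump_le[OF si], of h h] h by simp
qed

lemma ruling_point_near_top:
  assumes s: "s \<in> {0<..<tb}" and k: "0 < k" "k < 1" and y: "y = g1 s + (1 - k) * width s"
  shows "(y, ruling_t y s) \<in> domD tb g1 g2" "\<bar>y - g2 (partner s)\<bar> \<le> 2 * G * k"
    "\<bar>ruling_t y s - partner s\<bar> \<le> 12 * (G * P) * k"
    "\<bar>graph_fun (y, ruling_t y s) - f2 (partner s)\<bar> \<le> 2 * P * k"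
proof -
  have h: "0 < 1 - k" "1 - k < 1" using k by auto
  note R = ruling_point[OF s h y]
  have si: "s \<in> {0..tb}" using s by auto
  have S: "0 < width s" "width s \<le> 2 * G" using width_pos[OF s] width_le[OF si] by simp_all
  have a: "\<bar>f1 s\<bar> \<le> P" and c: "\<bar>f2 (partner s)\<bar> \<le> P"
    using f_bound[OF si] f_bound[OF partner(1)[OF si]] by simp_all
  have Sa: "\<bar>width s * f1 s\<bar> \<le> 2 * G * P" using abs_mult_le_mult[OF _ a, of "width s" "2 * G"] S by simp
  have Sc: "\<bar>width s * f2 (partner s)\<bar> \<le> 2 * G * P"
    using abs_mult_le_mult[OF _ c, of "width s" "2 * G"] S by simp
  have Tdiff: "ruling_t y s - partner s
      = 2 * k\<^sup>2 * (width s * f1 s) + 2 * (k * (2 - k)) * (width s * f2 (partner s))"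
    using R(5) partner_eq[OF si] by (simp add: width_def jump_def algebra_simps power2_eq_square)
  have kk: "k\<^sup>2 \<le> k" "0 \<le> k * (2 - k)" "k * (2 - k) \<le> 2 * k"
    using k by (auto simp: power2_eq_square mult_left_le_one_le)
  have "\<bar>2 * k\<^sup>2\<bar> \<le> 2 * k" "\<bar>2 * (k * (2 - k))\<bar> \<le> 2 * (2 * k)" using kk by simp_all
  from abs_mult_le_mult[OF this(1) Sa] abs_mult_le_mult[OF this(2) Sc]
  have t1: "\<bar>2 * k\<^sup>2 * (width s * f1 s)\<bar> \<le> 4 * (G * P) * k"
    and t2: "\<bar>2 * (k * (2 - k)) * (width s * f2 (partner s))\<bar> \<le> 8 * (G * P) * k"
    by (simp_all add: algebra_simps)
  show "(y, ruling_t y s) \<in> domD tb g1 g2" by (rule R(3))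
  show "\<bar>ruling_t y s - partner s\<bar> \<le> 12 * (G * P) * k" using Tdiff t1 t2 by argo
  have "y - g2 (partner s) = - (k * width s)" using y by (simp add: width_def algebra_simps)
  moreover have "0 \<le> k * width s" "k * width s \<le> k * (2 * G)"
    using S k by (simp_all add: mult_left_mono)
  ultimately show "\<bar>y - g2 (partner s)\<bar> \<le> 2 * G * k" by (simp add: algebra_simps)
  have "graph_fun (y, ruling_t y s) - f2 (partner s) = (f1 s - f2 (partner s)) * k"
    using R(4) by (simp add: jump_def algebra_simps)
  moreover have "\<bar>(f1 s - f2 (partner s)) * k\<bar> \<le> 2 * P * k"
    using abs_mult_le_mult[of "f1 s - f2 (partner s)" "2 * P" k k] a c k by simp
  ultimately show "\<bar>graph_fun (y, ruling_t y s) - f2 (partner s)\<bar> \<le> 2 * P * k" by simp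
qed

lemma graph_fun_near_f1:
  assumes s0: "s0 \<in> {0..tb}" and e: "0 < e"
  shows "\<exists>p\<in>domD tb g1 g2. dist p (g1 s0, s0) < e \<and> \<bar>graph_fun p - f1 s0\<bar> < e"
proof -
  define C where "C = 2 * G + Lg + 16 * (G * P) + 1 + 2 * P + Lp"
  have C: "0 \<le> C" using nonneg by (simp add: C_def)
  define d where "d = e / (C + 1)"
  have d: "0 < d" "C * d < e" using divide_add_one_bounds[OF C e] by (simp_all add: d_def)
  obtain s where s: "s \<in> {0<..<tb}" "\<bar>s - s0\<bar> \<le> d"
    using exists_in_open_interval_near[OF tb_pos s0 d(1)] by blast
  have si: "s \<in> {0..tb}" using s by auto
  define h where "h = min d (1/2)"
  have h: "0 < h" "h < 1" "h \<le> d" using d by (auto simp: h_def)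
  define y where "y = g1 s + h * width s"
  note B = ruling_point_near_bottom[OF s(1) h(1,2) y_def]
  have g: "\<bar>g1 s - g1 s0\<bar> \<le> Lg * d" using g_lip[OF si s0] mult_left_mono[OF s(2) nonneg(2)] by linarith
  have f: "\<bar>f1 s - f1 s0\<bar> \<le> Lp * d" using f_lip[OF si s0] mult_left_mono[OF s(2) nonneg(4)] by linarith
  have hd: "G * h \<le> G * d" "G * P * h \<le> G * P * d" "P * h \<le> P * d"
    using h(3) nonneg by (simp_all add: mult_left_mono)
  have Cd: "C * d = 2 * (G * d) + Lg * d + 16 * (G * P * d) + d + 2 * (P * d) + Lp * d"
    by (simp add: C_def algebra_simps)
  have nn: "0 \<le> P * d" "0 \<le> Lp * d" "0 \<le> G * d" "0 \<le> Lg * d" "0 \<le> G * P * d"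
    using nonneg d by simp_all
  have "dist (y, ruling_t y s) (g1 s0, s0) \<le> \<bar>y - g1 s0\<bar> + \<bar>ruling_t y s - s0\<bar>"
    by (rule dist_Pair_le_abs_sum)
  also have "\<dots> < e" using B(2,3) g s(2) hd Cd nn d(2) by (simp add: algebra_simps)
  finally have "dist (y, ruling_t y s) (g1 s0, s0) < e" .
  moreover have "\<bar>graph_fun (y, ruling_t y s) - f1 s0\<bar> < e"
  proof -
    have "\<bar>graph_fun (y, ruling_t y s) - f1 s0\<bar>
        \<le> \<bar>graph_fun (y, ruling_t y s) - f1 s\<bar> + \<bar>f1 s - f1 s0\<bar>"
      using abs_triangle_ineq[of "graph_fun (y, ruling_t y s) - f1 s" "f1 s - f1 s0"] by simp
    also have "\<dots> \<le> 2 * P * h + Lp * d" using B(4) f by (rule add_mono)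
    also have "\<dots> \<le> 2 * P * d + Lp * d" using h(3) nonneg by (simp add: mult_left_mono)
    also have "\<dots> \<le> C * d" using nn d(1) by (simp add: Cd)
    finally show ?thesis using d(2) by simp
  qed
  ultimately show ?thesis using B(1) by blast
qed

lemma graph_fun_near_f2:
  assumes l0: "l0 \<in> {0..tb}" and e: "0 < e"
  shows "\<exists>p\<in>domD tb g1 g2. dist p (g2 l0, l0) < e \<and> \<bar>graph_fun p - f2 l0\<bar> < e"
proof -
  obtain s0 where s0: "s0 \<in> {0..tb}" "partner s0 = l0" using partner_surj[OF l0] by blast
  define C where "C = 2 * G + 2 * Lg + 12 * (G * P) + 2 + 2 * P + 2 * Lp"
  have C: "0 \<le> C" using nonneg by (simp add: C_def)
  define d where "d = e / (C + 1)"
  have d: "0 < d" "C * d < e" using divide_add_one_bounds[OF C e] by (simp_all add: d_def)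
  obtain s where s: "s \<in> {0<..<tb}" "\<bar>s - s0\<bar> \<le> d"
    using exists_in_open_interval_near[OF tb_pos s0(1) d(1)] by blast
  have si: "s \<in> {0..tb}" using s by auto
  have li: "partner s \<in> {0..tb}" using partner(1)[OF si] .
  define k where "k = min d (1/2)"
  have k: "0 < k" "k < 1" "k \<le> d" using d by (auto simp: k_def)
  define y where "y = g1 s + (1 - k) * width s"
  note T = ruling_point_near_top[OF s(1) k(1,2) y_def]
  have dl: "\<bar>partner s - l0\<bar> \<le> 2 * d" using partner_lipschitz[OF s0(1) si] s(2) s0(2) by simp
  have g: "\<bar>g2 (partner s) - g2 l0\<bar> \<le> Lg * (2 * d)"
    using g_lip[OF li l0] mult_left_mono[OF dl nonneg(2)] by linarith
  have f: "\<bar>f2 (partner s) - f2 l0\<bar> \<le> Lp * (2 * d)"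
    using f_lip[OF li l0] mult_left_mono[OF dl nonneg(4)] by linarith
  have kd: "G * k \<le> G * d" "G * P * k \<le> G * P * d" "P * k \<le> P * d"
    using k(3) nonneg by (simp_all add: mult_left_mono)
  have Cd: "C * d = 2 * (G * d) + 2 * (Lg * d) + 12 * (G * P * d) + 2 * d + 2 * (P * d) + 2 * (Lp * d)"
    by (simp add: C_def algebra_simps)
  have nn: "0 \<le> P * d" "0 \<le> Lp * d" "0 \<le> G * d" "0 \<le> Lg * d" "0 \<le> G * P * d" using nonneg d by simp_all
  have "dist (y, ruling_t y s) (g2 l0, l0) \<le> \<bar>y - g2 l0\<bar> + \<bar>ruling_t y s - l0\<bar>"
    by (rule dist_Pair_le_abs_sum)
  also have "\<dots> < e" using T(2,3) g dl kd Cd nn d(2) by (simp add: algebra_simps)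
  finally have "dist (y, ruling_t y s) (g2 l0, l0) < e" .
  moreover have "\<bar>graph_fun (y, ruling_t y s) - f2 l0\<bar> < e"
  proof -
    have "\<bar>graph_fun (y, ruling_t y s) - f2 l0\<bar>
        \<le> \<bar>graph_fun (y, ruling_t y s) - f2 (partner s)\<bar> + \<bar>f2 (partner s) - f2 l0\<bar>"
      using abs_triangle_ineq[of "graph_fun (y, ruling_t y s) - f2 (partner s)" "f2 (partner s) - f2 l0"]
      by simp
    also have "\<dots> \<le> 2 * P * k + Lp * (2 * d)" using T(4) f by (rule add_mono)
    also have "\<dots> \<le> 2 * P * d + Lp * (2 * d)" using k(3) nonneg by (simp add: mult_left_mono)
    also have "\<dots> \<le> C * d" using nn d(1) by (simp add: Cd)
    finally show ?thesis using d(2) by simp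
  qed
  ultimately show ?thesis using T(1) by blast
qed

lemma lam_eq_partner:
  assumes s: "s \<in> {0..tb}" shows "lam tb g1 g2 phi s = partner s"
proof -
  have "p_i phi g2 l - p_i phi g1 s \<in> hplane (p_i phi g1 s) \<longleftrightarrow> horizontal_defect s l = 0" for l
  proof -
    have p1: "p_i phi g1 s = (f1 s, g1 s, s + 2 * g1 s * f1 s)" by (simp add: p_i_def)
    have pd: "p_i phi g2 l - (f1 s, g1 s, s + 2 * g1 s * f1 s)
        = (f2 l - f1 s, g2 l - g1 s, (l + 2 * g2 l * f2 l) - (s + 2 * g1 s * f1 s))"
      by (simp add: p_i_def)
    have "p_i phi g2 l - p_i phi g1 s \<in> hplane (p_i phi g1 s) \<longleftrightarrow>
        (l + 2 * g2 l * f2 l) - (s + 2 * g1 s * f1 s) = 2 * g1 s * (f2 l - f1 s) - 2 * f1 s * (g2 l - g1 s)"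
      unfolding p1 pd by (rule mem_hplane_iff)
    moreover have "(l + 2 * g2 l * f2 l - (s + 2 * g1 s * f1 s))
        - (2 * g1 s * (f2 l - f1 s) - 2 * f1 s * (g2 l - g1 s)) = horizontal_defect s l"
      by (simp add: horizontal_defect_def algebra_simps)
    ultimately show ?thesis by argo
  qed
  then show ?thesis unfolding lam_def partner_def by simp
qed

lemma rho_eq:
  assumes s: "s \<in> {0<..<tb}" and h: "0 < h" "h < 1" and y: "y = g1 s + h * width s"
  shows "rho tb g1 g2 phi h s
    = (graph_fun (y, ruling_t y s), y, ruling_t y s + 2 * y * graph_fun (y, ruling_t y s))"
proof -
  note R = ruling_point[OF s h y]
  have si: "s \<in> {0..tb}" using s by auto
  define l where "l = partner s"
  define t where "t = ruling_t y s"
  define x where "x = graph_fun (y, t)"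
  have lid: "l = s - 2 * (g2 l - g1 s) * (f1 s + f2 l)" unfolding l_def by (rule partner_eq[OF si])
  have t: "t = s - 4 * h * ((g2 l - g1 s) * f1 s) - 2 * h\<^sup>2 * ((g2 l - g1 s) * (f2 l - f1 s))"
    using R(5) by (simp add: t_def width_def jump_def l_def)
  have x: "x = f1 s + (f2 l - f1 s) * h" using R(4) by (simp add: x_def t_def jump_def l_def)
  have y': "y = g1 s + h * (g2 l - g1 s)" using y by (simp add: width_def l_def)
  have identity: "(1 - h) * (s + 2 * b * a) + h * (l' + 2 * d * c) = T + 2 * Y * X"
    if "l' = s - 2 * (d - b) * (a + c)" "T = s - 4 * h * ((d - b) * a) - 2 * h\<^sup>2 * ((d - b) * (c - a))"
      "X = a + (c - a) * h" "Y = b + h * (d - b)" for a b c d l' T X Y :: real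
    unfolding that by (simp add: algebra_simps power2_eq_square)
  have "rho tb g1 g2 phi h s = ((1 - h) * f1 s + h * f2 l, (1 - h) * g1 s + h * g2 l,
      (1 - h) * (s + 2 * g1 s * f1 s) + h * (l + 2 * g2 l * f2 l))"
    unfolding rho_def lam_eq_partner[OF si] l_def by (simp add: p_i_def)
  also have "\<dots> = (x, y, t + 2 * y * x)"
  proof -
    have "(1 - h) * f1 s + h * f2 l = x" "(1 - h) * g1 s + h * g2 l = y"
      using x y' by (simp_all add: algebra_simps)
    then show ?thesis by (simp only: identity[OF lid t x y'])
  qed
  finally show ?thesis unfolding x_def t_def .
qed

definition u_phi where "u_phi q = (if q \<in> domD tb g1 g2 then graph_fun q else phi q)"

lemma R_phi_eq_S_u: "R_phi tb g1 g2 phi = S_u (domD tb g1 g2) u_phi"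
proof
  show "R_phi tb g1 g2 phi \<subseteq> S_u (domD tb g1 g2) u_phi"
  proof
    fix p assume "p \<in> R_phi tb g1 g2 phi"
    then obtain h s where p: "p = rho tb g1 g2 phi h s" and h: "0 < h" "h < 1" and s: "s \<in> {0<..<tb}"
      unfolding R_phi_def by auto
    define y where "y = g1 s + h * width s"
    have inD: "(y, ruling_t y s) \<in> domD tb g1 g2" using ruling_point(3)[OF s h y_def] .
    have "p = (u_phi (y, ruling_t y s), y, ruling_t y s + 2 * y * u_phi (y, ruling_t y s))"
      using rho_eq[OF s h y_def] p inD by (simp add: u_phi_def)
    then show "p \<in> S_u (domD tb g1 g2) u_phi" unfolding S_u_def using inD by blast
  qed
  show "S_u (domD tb g1 g2) u_phi \<subseteq> R_phi tb g1 g2 phi"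
  proof
    fix p assume "p \<in> S_u (domD tb g1 g2) u_phi"
    then obtain y t where p: "p = (u_phi (y, t), y, t + 2 * y * u_phi (y, t))" and yt: "(y, t) \<in> domD tb g1 g2"
      unfolding S_u_def by auto
    define s where "s = ruling y t"
    note S = ruling[OF yt, folded s_def]
    have w: "0 < width s" by (rule width_pos[OF S(1)])
    define h where "h = (y - g1 s) / width s"
    have h: "0 < h" "h < 1" using S(2,3) w unfolding h_def width_def by (auto simp: divide_less_eq_1_pos)
    have y: "y = g1 s + h * width s" using w by (simp add: h_def)
    have "rho tb g1 g2 phi h s = (graph_fun (y, t), y, t + 2 * y * graph_fun (y, t))"
      using rho_eq[OF S(1) h y] S(4) by simp
    then have "p = rho tb g1 g2 phi h s" using p yt by (simp add: u_phi_def)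
    then show "p \<in> R_phi tb g1 g2 phi" unfolding R_phi_def using h S(1) by auto
  qed
qed

lemma u_phi_frontier: "q \<in> frontier (domD tb g1 g2) \<Longrightarrow> u_phi q = phi q"
  using open_domD by (auto simp: u_phi_def frontier_def interior_open)

lemma lipschitz_u_phi: "\<exists>L. L-lipschitz_on (closure (domD tb g1 g2)) u_phi"
proof -
  obtain L where L: "L-lipschitz_on (domD tb g1 g2) graph_fun" using graph_fun_lipschitz ..
  have "L-lipschitz_on (closure (domD tb g1 g2)) u_phi"
  proof (rule lipschitz_on_approx[OF L])
    fix q and e :: real assume q: "q \<in> closure (domD tb g1 g2)" and e: "0 < e"
    show "\<exists>q'\<in>domD tb g1 g2. dist q' q < e \<and> dist (graph_fun q') (u_phi q) < e"
    proof (cases "q \<in> domD tb g1 g2")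
      case True
      then show ?thesis using e by (intro bexI[of _ q]) (auto simp: u_phi_def)
    next
      case False
      then have "q \<in> frontier (domD tb g1 g2)" using q by (simp add: frontier_def interior_open[OF open_domD])
      then obtain t where t: "t \<in> {0..tb}" and "q = (g1 t, t) \<or> q = (g2 t, t)"
        unfolding frontier_domD by auto
      then show ?thesis
        using graph_fun_near_f1[OF t e] graph_fun_near_f2[OF t e] False
        by (auto simp: u_phi_def phi_i_def dist_real_def)
    qed
  qed
  then show ?thesis ..
qed

end

lemma (in lens_domain) ruled_surface_if_zeta_small:
  assumes g_lip: "\<exists>L. L-lipschitz_on {0<..<tb} g1" "\<exists>L. L-lipschitz_on {0<..<tb} g2"
    and phi_cont: "continuous_on (frontier (domD tb g1 g2)) phi"
    and phi_lip: "\<exists>L. L-lipschitz_on {0<..<tb} (phi_i phi g1)" "\<exists>L. L-lipschitz_on {0<..<tb} (phi_i phi g2)"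
    and small: "zeta tb g1 g2 phi < (sqrt 129 - 11) / 4"
  shows "ruled_surface tb g1 g2 phi
    (max (sup_norm tb g1) (sup_norm tb g2)) (max (lip_const tb g1) (lip_const tb g2))
    (max (sup_norm tb (phi_i phi g1)) (sup_norm tb (phi_i phi g2)))
    (max (lip_const tb (phi_i phi g1)) (lip_const tb (phi_i phi g2)))"
proof -
  note f_cont = continuous_on_phi_i[OF phi_cont]
  have bound: "\<bar>f s\<bar> \<le> M" if "continuous_on {0..tb} f" "sup_norm tb f \<le> M" "s \<in> {0..tb}" for f M s
    using abs_le_sup_norm[OF tb_pos that(1,3)] that(2) by linarith
  have lip: "\<bar>f x - f y\<bar> \<le> L * \<bar>x - y\<bar>"
    if "continuous_on {0..tb} f" "\<exists>L. L-lipschitz_on {0<..<tb} f" "lip_const tb f \<le> L"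
      "x \<in> {0..tb}" "y \<in> {0..tb}" for f L x y
    using lipschitz_onD[OF lipschitz_on_le[OF lipschitz_on_lip_const[OF tb_pos that(1,2)] that(3)] that(4,5)]
    by (simp add: dist_real_def)
  have sup_nonneg: "0 \<le> sup_norm tb f" if "continuous_on {0..tb} f" for f
    using abs_le_sup_norm[OF tb_pos that, of 0] tb_pos by simp
  have lip_nonneg: "0 \<le> lip_const tb f" if "continuous_on {0..tb} f" "\<exists>L. L-lipschitz_on {0<..<tb} f" for f
    using lipschitz_on_nonneg[OF lipschitz_on_lip_const[OF tb_pos that]] .
  define G where "G = max (sup_norm tb g1) (sup_norm tb g2)"
  define Lg where "Lg = max (lip_const tb g1) (lip_const tb g2)"
  define P where "P = max (sup_norm tb (phi_i phi g1)) (sup_norm tb (phi_i phi g2))"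
  define Lp where "Lp = max (lip_const tb (phi_i phi g1)) (lip_const tb (phi_i phi g2))"
  have nonneg: "0 \<le> G" "0 \<le> Lg" "0 \<le> P" "0 \<le> Lp"
    using sup_nonneg[OF g1_cont] lip_nonneg[OF g1_cont g_lip(1)] sup_nonneg[OF f_cont(1)]
      lip_nonneg[OF f_cont(1) phi_lip(1)] by (auto simp: G_def Lg_def P_def Lp_def)
  have "4 * (Lg * P + G * Lp) \<le> 4 * (G + Lg) * (P + Lp)"
    using nonneg by (simp add: algebra_simps)
  also have "\<dots> = zeta tb g1 g2 phi" by (simp add: zeta_def G_def Lg_def P_def Lp_def)
  finally have "4 * (Lg * P + G * Lp) \<le> 1/10" using small sqrt_129_bound by linarith
  then show ?thesis
    unfolding G_def[symmetric] Lg_def[symmetric] P_def[symmetric] Lp_def[symmetric]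
    by unfold_locales
      (use phi_cont nonneg bound[OF g1_cont] bound[OF g2_cont] bound[OF f_cont(1)] bound[OF f_cont(2)]
         lip[OF g1_cont g_lip(1)] lip[OF g2_cont g_lip(2)] lip[OF f_cont(1) phi_lip(1)]
         lip[OF f_cont(2) phi_lip(2)] in \<open>auto simp: G_def Lg_def P_def Lp_def\<close>)
qed

theorem theorem3p1:
  fixes tb :: real and g1 g2 :: "real \<Rightarrow> real" and phi :: "real \<times> real \<Rightarrow> real"
  assumes tb: "tb > 0"
    and g1_lip: "\<exists>L. lipschitz_on L {0<..<tb} g1"
    and g2_lip: "\<exists>L. lipschitz_on L {0<..<tb} g2"
    and g1_cont: "continuous_on {0..tb} g1"
    and g2_cont: "continuous_on {0..tb} g2"
    and sign: "\<And>t. t \<in> {0<..<tb} \<Longrightarrow> g1 t < 0 \<and> 0 < g2 t"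
    and ends: "g1 0 = 0" "g1 tb = 0" "g2 0 = 0" "g2 tb = 0"
    and g1_convex: "convex_on {0..tb} g1"
    and g2_concave: "concave_on {0..tb} g2"
    and phi_cont: "continuous_on (frontier (domD tb g1 g2)) phi"
    and phi1_lip: "\<exists>L. lipschitz_on L {0<..<tb} (phi_i phi g1)"
    and phi2_lip: "\<exists>L. lipschitz_on L {0<..<tb} (phi_i phi g2)"
    and small: "zeta tb g1 g2 phi < (sqrt 129 - 11) / 4"
  shows "\<exists>u :: real \<times> real \<Rightarrow> real.
           R_phi tb g1 g2 phi = S_u (domD tb g1 g2) u
         \<and> (\<exists>L. lipschitz_on L (closure (domD tb g1 g2)) u)
         \<and> (\<forall>q \<in> frontier (domD tb g1 g2). u q = phi q)"
proof -
  interpret lens_domain tb g1 g2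
    by unfold_locales (use tb g1_cont g2_cont sign ends g1_convex g2_concave in auto)
  interpret ruled_surface tb g1 g2 phi
    "max (sup_norm tb g1) (sup_norm tb g2)" "max (lip_const tb g1) (lip_const tb g2)"
    "max (sup_norm tb (phi_i phi g1)) (sup_norm tb (phi_i phi g2))"
    "max (lip_const tb (phi_i phi g1)) (lip_const tb (phi_i phi g2))"
    by (rule ruled_surface_if_zeta_small[OF g1_lip g2_lip phi_cont phi1_lip phi2_lip small])
  show ?thesis using R_phi_eq_S_u lipschitz_u_phi u_phi_frontier by blast
qed

end
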